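(* Let $n \ge 1$ and $m \ge 1$ be integers, let $\lambda > 1$ be a real number, and let the coefficients $a_\alpha$, $a$, $b$ be as in the context. Suppose that for some real number $\sigma > 1$, $$\int_1^\infty r^{(m - n)\lambda + n - 1} q(r)\, dr = \infty, \qquad \text{where } q(r) = \left( \frac{1}{r^n} \int_{B_{\sigma r} \setminus B_{r/\sigma}} a^{\lambda/(\lambda-1)}(x)\, b^{-1/(\lambda-1)}(x)\, dx \right)^{1-\lambda},$$ with the convention that $q(r) = 0$ whenever the integral inside the parentheses equals $\infty$. Then every solution $u$ of the inequality $$\sum_{|\alpha| = m} (-1)^m \partial^\alpha a_\alpha(x, u) \ge b(x) |u|^\lambda \quad \text{in } \mathbb{R}^n$$ is trivial, i.e. $u(x) = 0$ for almost all $x \in \mathbb{R}^n$.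
   Context: For each multi-index $\alpha = (\alpha_1,\dots,\alpha_n)$ with $|\alpha| = \alpha_1 + \dots + \alpha_n = m$, $a_\alpha : \mathbb{R}^n \times \mathbb{R} \to \mathbb{R}$ is a given function, and $\partial^\alpha = \partial^{|\alpha|}/\partial x_1^{\alpha_1}\cdots\partial x_n^{\alpha_n}$. The function $b : \mathbb{R}^n \to (0,\infty)$ is measurable and positive, and there is a positive measurable function $a : \mathbb{R}^n \to (0,\infty)$ such that $|a_\alpha(x,\zeta)| \le a(x)|\zeta|$ for almost all $x \in \mathbb{R}^n$, all $\zeta \in \mathbb{R}$ and all $|\alpha| = m$. $B_r$ denotes the open ball in $\mathbb{R}^n$ of radius $r>0$ centered at the origin. A function $u$ is called a solution of the inequality if $b(x)|u|^\lambda \in L_{1,loc}(\mathbb{R}^n)$, $a_\alpha(x,u) \in L_{1,loc}(\mathbb{R}^n)$ for all $|\alpha| = m$, and $$\int_{\mathbb{R}^n} \sum_{|\alpha|=m} a_\alpha(x,u)\, \partial^\alpha \varphi \, dx \ge \int_{\mathbb{R}^n} b(x)|u|^\lambda \varphi\, dx$$ for every non-negative $\varphi \in C_0^\infty(\mathbb{R}^n)$. *)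

theory Defs
  imports "HOL-Analysis.Analysis"
begin

definition pdiff :: "'n::finite \<Rightarrow> (real^'n \<Rightarrow> real) \<Rightarrow> real^'n \<Rightarrow> real" where
  "pdiff i f x = deriv (\<lambda>t. f (x + t *\<^sub>R axis i 1)) 0"

fun pdiffs :: "'n::finite list \<Rightarrow> (real^'n \<Rightarrow> real) \<Rightarrow> real^'n \<Rightarrow> real" where
  "pdiffs [] f = f"
| "pdiffs (i # is) f = pdiff i (pdiffs is f)"

text \<open>Multi-index order and the derivative \<partial>^\<alpha> (for smooth functions the
  order of differentiation is irrelevant; we pick any list realising \<alpha>).\<close>
definition mi_order :: "('n::finite \<Rightarrow> nat) \<Rightarrow> nat" where
  "mi_order \<alpha> = (\<Sum>i\<in>UNIV. \<alpha> i)"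

definition Dalpha :: "('n::finite \<Rightarrow> nat) \<Rightarrow> (real^'n \<Rightarrow> real) \<Rightarrow> real^'n \<Rightarrow> real" where
  "Dalpha \<alpha> f = pdiffs (SOME is. \<forall>i. count_list is i = \<alpha> i) f"

definition smooth_fun :: "(real^'n::finite \<Rightarrow> real) \<Rightarrow> bool" where
  "smooth_fun f \<longleftrightarrow> (\<forall>is. continuous_on UNIV (pdiffs is f) \<and>
      (\<forall>i x. (\<lambda>t. pdiffs is f (x + t *\<^sub>R axis i 1)) differentiable (at 0)))"

definition test_fun :: "(real^'n::finite \<Rightarrow> real) \<Rightarrow> bool" where
  "test_fun f \<longleftrightarrow> smooth_fun f \<and> compact (closure {x. f x \<noteq> 0})"

definition loc_integrable :: "(real^'n::finite \<Rightarrow> real) \<Rightarrow> bool" where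
  "loc_integrable f \<longleftrightarrow> (\<forall>K. compact K \<longrightarrow> set_integrable lebesgue K f)"

definition is_solution ::
  "nat \<Rightarrow> real \<Rightarrow> (('n::finite \<Rightarrow> nat) \<Rightarrow> real^'n \<Rightarrow> real \<Rightarrow> real) \<Rightarrow> (real^'n \<Rightarrow> real)
     \<Rightarrow> (real^'n \<Rightarrow> real) \<Rightarrow> bool" where
  "is_solution m lam A b u \<longleftrightarrow>
     loc_integrable (\<lambda>x. b x * \<bar>u x\<bar> powr lam) \<and>
     (\<forall>\<alpha>. mi_order \<alpha> = m \<longrightarrow> loc_integrable (\<lambda>x. A \<alpha> x (u x))) \<and>
     (\<forall>\<phi>. test_fun \<phi> \<and> (\<forall>x. \<phi> x \<ge> 0) \<longrightarrow>
        (\<integral>x. (\<Sum>\<alpha>\<in>{\<alpha>. mi_order \<alpha> = m}. A \<alpha> x (u x) * Dalpha \<alpha> \<phi> x) \<partial>lebesgue)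
        \<ge> (\<integral>x. b x * \<bar>u x\<bar> powr lam * \<phi> x \<partial>lebesgue))"

definition qfun :: "real \<Rightarrow> real \<Rightarrow> (real^'n::finite \<Rightarrow> real) \<Rightarrow> (real^'n \<Rightarrow> real) \<Rightarrow> real \<Rightarrow> ennreal" where
  "qfun lam \<sigma> a b r =
     (let I = (\<integral>\<^sup>+ x \<in> ball 0 (\<sigma> * r) - ball 0 (r / \<sigma>).
                 ennreal (a x powr (lam / (lam - 1)) * b x powr (- 1 / (lam - 1))) \<partial>lebesgue)
      in if I = \<infinity> then 0
         else ennreal ((enn2real I / r ^ CARD('n)) powr (1 - lam)))"

end

theory Submission
  imports Defs "HOL-Computational_Algebra.Polynomial"
begin

(* Test the inequality with phi_r(x) = psi(|x|^2/r^2)^k, where psi is a smooth step equal to 1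
   below 1/sigma^2 and 0 above 1, and k is large. Every derivative of order m of phi_r lives on the
   annulus B_{sigma r} - B_{r/sigma} and is bounded by C r^-m phi_r^(1/lambda). With
   J(rho) = int_{B_rho} b |u|^lambda and Y the part of int b |u|^lambda phi_r over the annulus,
   the weak inequality and Hoelder's inequality with weight a^(lambda/(lambda-1)) b^(-1/(lambda-1))
   give J(r/sigma) + Y <= C r^-m Y^(1/lambda) I(r)^((lambda-1)/lambda), I(r) being the weighted
   integral in q(r). Eliminating Y yields
     r^((m-n) lambda + n - 1) q(r) <= C' (J(r/sigma)^(1-lambda) - J(sigma r)^(1-lambda)) / r,
   and these differences telescope along the radii sigma^k. Hence the integral in the hypothesis
   is finite unless J vanishes identically, i.e. unless u = 0 almost everywhere. *)

section \<open>Smooth functions of one real variable\<close>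

definition smooth_upto :: "nat \<Rightarrow> (real \<Rightarrow> real) \<Rightarrow> bool" where
  "smooth_upto N h \<longleftrightarrow> (\<forall>j\<le>N. \<forall>t. (deriv ^^ j) h differentiable at t)"

definition smooth_real :: "(real \<Rightarrow> real) \<Rightarrow> bool" where
  "smooth_real h \<longleftrightarrow> (\<forall>N. smooth_upto N h)"

lemma smooth_upto_0: "smooth_upto 0 h \<longleftrightarrow> (\<forall>t. h differentiable at t)"
  by (simp add: smooth_upto_def)

lemma smooth_upto_Suc:
  "smooth_upto (Suc N) h \<longleftrightarrow> (\<forall>t. h differentiable at t) \<and> smooth_upto N (deriv h)"
proof -
  have funpow_Suc: "(deriv ^^ Suc j) h = (deriv ^^ j) (deriv h)" for j
    by (simp add: funpow_Suc_right del: funpow.simps)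
  show ?thesis
    unfolding smooth_upto_def
  proof (intro iffI conjI allI impI)
    fix t assume "\<forall>j\<le>Suc N. \<forall>t. (deriv ^^ j) h differentiable at t"
    then show "h differentiable at t" by (metis funpow_0 le0)
  next
    fix j t assume "\<forall>j\<le>Suc N. \<forall>t. (deriv ^^ j) h differentiable at t" and "j \<le> N"
    then have "(deriv ^^ Suc j) h differentiable at t" by (metis Suc_le_mono)
    then show "(deriv ^^ j) (deriv h) differentiable at t" by (simp only: funpow_Suc)
  next
    fix j t
    assume h: "(\<forall>t. h differentiable at t) \<and> (\<forall>j\<le>N. \<forall>t. (deriv ^^ j) (deriv h) differentiable at t)"
      and j: "j \<le> Suc N"
    show "(deriv ^^ j) h differentiable at t"
    proof (cases j)
      case 0 then show ?thesis using h by simp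
    next
      case (Suc j') then show ?thesis using h j funpow_Suc by simp
    qed
  qed
qed

lemma smooth_upto_mono: "smooth_upto N h \<Longrightarrow> M \<le> N \<Longrightarrow> smooth_upto M h"
  by (auto simp: smooth_upto_def)

lemma smooth_upto_differentiable: "smooth_upto N h \<Longrightarrow> h differentiable at t"
  using smooth_upto_mono[of N h 0] by (simp add: smooth_upto_0)

lemmas DERIV_deriv = DERIV_deriv_iff_real_differentiable[THEN iffD2]

lemma smooth_upto_const: "smooth_upto N (\<lambda>t. c)"
proof (induction N arbitrary: c)
  case (Suc N)
  have "deriv (\<lambda>t. c) = (\<lambda>t. 0)"
    by (rule ext, rule DERIV_imp_deriv) auto
  with Suc.IH[of 0] show ?case by (simp add: smooth_upto_Suc)
qed (simp add: smooth_upto_0)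

lemma smooth_upto_add: "smooth_upto N f \<Longrightarrow> smooth_upto N g \<Longrightarrow> smooth_upto N (\<lambda>t. f t + g t)"
proof (induction N arbitrary: f g)
  case (Suc N)
  have df: "\<And>t. f differentiable at t" and dg: "\<And>t. g differentiable at t"
    using Suc.prems smooth_upto_Suc by auto
  have "deriv (\<lambda>t. f t + g t) = (\<lambda>t. deriv f t + deriv g t)"
    by (rule ext, rule DERIV_imp_deriv) (auto intro!: derivative_eq_intros DERIV_deriv df dg)
  moreover have "smooth_upto N (\<lambda>t. deriv f t + deriv g t)"
    using Suc smooth_upto_Suc by auto
  ultimately show ?case using smooth_upto_Suc df dg by auto
qed (simp add: smooth_upto_0)

lemma smooth_upto_mult: "smooth_upto N f \<Longrightarrow> smooth_upto N g \<Longrightarrow> smooth_upto N (\<lambda>t. f t * g t)"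
proof (induction N arbitrary: f g)
  case (Suc N)
  have df: "\<And>t. f differentiable at t" and dg: "\<And>t. g differentiable at t"
    using Suc.prems smooth_upto_Suc by auto
  have "deriv (\<lambda>t. f t * g t) = (\<lambda>t. deriv f t * g t + f t * deriv g t)"
    by (rule ext, rule DERIV_imp_deriv) (auto intro!: derivative_eq_intros DERIV_deriv df dg)
  moreover have "smooth_upto N f" "smooth_upto N g"
    using Suc.prems smooth_upto_mono by auto
  moreover have "smooth_upto N (deriv f)" "smooth_upto N (deriv g)"
    using Suc.prems smooth_upto_Suc by auto
  ultimately have "smooth_upto N (deriv (\<lambda>t. f t * g t))"
    using Suc.IH smooth_upto_add by simp
  then show ?case using smooth_upto_Suc df dg by auto
qed (simp add: smooth_upto_0)

lemma smooth_upto_compose: "smooth_upto N h \<Longrightarrow> smooth_upto N g \<Longrightarrow> smooth_upto N (\<lambda>t. h (g t))"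
proof (induction N arbitrary: h)
  case 0
  then show ?case using differentiable_chain_at[of g _ h] by (auto simp: smooth_upto_0 o_def)
next
  case (Suc N)
  have dh: "\<And>t. h differentiable at t" and dg: "\<And>t. g differentiable at t"
    using Suc.prems smooth_upto_Suc by auto
  have "deriv (\<lambda>t. h (g t)) = (\<lambda>t. deriv h (g t) * deriv g t)"
    by (rule ext, rule DERIV_imp_deriv, rule DERIV_chain2[OF DERIV_deriv DERIV_deriv]) (auto intro: dh dg)
  moreover have "smooth_upto N (\<lambda>t. deriv h (g t))" "smooth_upto N (deriv g)"
    using Suc smooth_upto_Suc smooth_upto_mono by auto
  ultimately show ?case
    using smooth_upto_Suc dh dg smooth_upto_mult differentiable_chain_at[of g _ h] by (auto simp: o_def)
qed

lemma smooth_upto_inverse: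
  assumes "\<And>t. g t \<noteq> 0"
  shows "smooth_upto N g \<Longrightarrow> smooth_upto N (\<lambda>t. inverse (g t))"
proof (induction N)
  case 0
  then show ?case using assms by (auto simp: smooth_upto_0 real_differentiable_def intro!: derivative_eq_intros)
next
  case (Suc N)
  have dg: "\<And>t. g differentiable at t"
    using Suc.prems smooth_upto_Suc by auto
  have dinv: "\<And>t. (\<lambda>t. inverse (g t)) differentiable at t"
    using dg assms by (auto simp: real_differentiable_def intro!: derivative_eq_intros)
  have "deriv (\<lambda>t. inverse (g t)) = (\<lambda>t. (-1) * (deriv g t * (inverse (g t) * inverse (g t))))"
    by (rule ext, rule DERIV_imp_deriv)
       (auto intro!: derivative_eq_intros DERIV_deriv dg assms simp: power2_eq_square)
  moreover have "smooth_upto N (\<lambda>t. inverse (g t))"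
    using Suc smooth_upto_mono by auto
  moreover have "smooth_upto N (deriv g)"
    using Suc.prems smooth_upto_Suc by auto
  ultimately have "smooth_upto N (\<lambda>t. (-1) * (deriv g t * (inverse (g t) * inverse (g t))))"
    by (intro smooth_upto_mult smooth_upto_const)
  then have "smooth_upto N (deriv (\<lambda>t. inverse (g t)))"
    using \<open>deriv _ = _\<close> by simp
  then show ?case using smooth_upto_Suc dinv by auto
qed

lemma smooth_real_const: "smooth_real (\<lambda>t. c)"
  by (simp add: smooth_real_def smooth_upto_const)

lemma smooth_real_add: "smooth_real f \<Longrightarrow> smooth_real g \<Longrightarrow> smooth_real (\<lambda>t. f t + g t)"
  by (simp add: smooth_real_def smooth_upto_add)

lemma smooth_real_mult: "smooth_real f \<Longrightarrow> smooth_real g \<Longrightarrow> smooth_real (\<lambda>t. f t * g t)"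
  by (simp add: smooth_real_def smooth_upto_mult)

lemma smooth_real_compose: "smooth_real f \<Longrightarrow> smooth_real g \<Longrightarrow> smooth_real (\<lambda>t. f (g t))"
  by (simp add: smooth_real_def smooth_upto_compose)

lemma smooth_real_inverse: "smooth_real g \<Longrightarrow> (\<And>t. g t \<noteq> 0) \<Longrightarrow> smooth_real (\<lambda>t. inverse (g t))"
  by (simp add: smooth_real_def smooth_upto_inverse)

lemma smooth_real_power: "smooth_real g \<Longrightarrow> smooth_real (\<lambda>s. g s ^ k)"
  by (induction k) (auto intro: smooth_real_const smooth_real_mult)

lemma smooth_real_id: "smooth_real (\<lambda>t. t)"
  unfolding smooth_real_def
proof
  fix N
  have "deriv (\<lambda>t. t) = (\<lambda>t. 1::real)"
    by (rule ext, rule DERIV_imp_deriv) auto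
  then show "smooth_upto N (\<lambda>t. t)"
    by (cases N) (simp_all add: smooth_upto_0 smooth_upto_Suc smooth_upto_const)
qed

lemma smooth_real_deriv: "smooth_real h \<Longrightarrow> smooth_real (deriv h)"
  by (simp add: smooth_real_def) (metis smooth_upto_Suc)

lemma smooth_real_funpow_deriv: "smooth_real h \<Longrightarrow> smooth_real ((deriv ^^ j) h)"
  by (induction j) (auto intro: smooth_real_deriv)

lemma smooth_real_differentiable: "smooth_real h \<Longrightarrow> h differentiable at t"
  by (simp add: smooth_real_def smooth_upto_differentiable)

lemma smooth_real_DERIV: "smooth_real h \<Longrightarrow> (h has_real_derivative deriv h t) (at t)"
  by (simp add: smooth_real_differentiable DERIV_deriv)

lemma smooth_real_continuous_on: "smooth_real h \<Longrightarrow> continuous_on S h"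
  using smooth_real_differentiable
  by (intro continuous_at_imp_continuous_on) (auto intro: differentiable_imp_continuous_within)

lemma deriv_funpow_power:
  assumes "smooth_real g" "j \<le> k"
  shows "\<exists>c. smooth_real c \<and> (deriv ^^ j) (\<lambda>s. g s ^ k) = (\<lambda>s. g s ^ (k - j) * c s)"
  using assms(2)
proof (induction j)
  case 0
  then show ?case by (intro exI[of _ "\<lambda>_. 1"]) (simp add: smooth_real_const)
next
  case (Suc j)
  then obtain c where c: "smooth_real c" "(deriv ^^ j) (\<lambda>s. g s ^ k) = (\<lambda>s. g s ^ (k - j) * c s)"
    by auto
  obtain p where p: "k - j = Suc p" "k - Suc j = p"
    using Suc.prems by (intro that[of "k - j - 1"]) auto
  have "deriv (\<lambda>s. g s ^ Suc p * c s) = (\<lambda>s. g s ^ p * (real (Suc p) * deriv g s * c s + g s * deriv c s))"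
  proof (rule ext, rule DERIV_imp_deriv)
    fix s
    have "((\<lambda>s. g s ^ Suc p * c s) has_real_derivative
       g s ^ Suc p * deriv c s + ((1 + of_nat p) * (deriv g s * g s ^ p)) * c s) (at s)"
      by (intro DERIV_mult' DERIV_power_Suc smooth_real_DERIV assms c)
    then show "((\<lambda>s. g s ^ Suc p * c s) has_real_derivative
        g s ^ p * (real (Suc p) * deriv g s * c s + g s * deriv c s)) (at s)"
      by (simp add: algebra_simps)
  qed
  moreover have "smooth_real (\<lambda>s. real (Suc p) * deriv g s * c s + g s * deriv c s)"
    by (intro smooth_real_add smooth_real_mult smooth_real_const smooth_real_deriv assms c)
  ultimately show ?case using c p by (auto simp del: of_nat_Suc)
qed

section \<open>A smooth step function\<close>

definition poly_exp_recip :: "real poly \<Rightarrow> real \<Rightarrow> real" where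
  "poly_exp_recip P t = (if t > 0 then poly P (1/t) * exp (-1/t) else 0)"

definition poly_exp_recip_deriv :: "real poly \<Rightarrow> real poly" where
  "poly_exp_recip_deriv P = [:0, 0, 1:] * (P - pderiv P)"

lemma tendsto_poly_recip_exp: "((\<lambda>h. poly Q (1/h) * exp (-1/h)) \<longlongrightarrow> 0) (at_right (0::real))"
proof -
  have "((\<lambda>y. \<Sum>i\<le>degree Q. coeff Q i * (y ^ i / exp y)) \<longlongrightarrow> (\<Sum>i\<le>degree Q. coeff Q i * 0)) at_top"
    by (intro tendsto_sum tendsto_mult tendsto_const tendsto_power_div_exp_0)
  moreover have "(\<lambda>y. poly Q y * exp (- y)) = (\<lambda>y. \<Sum>i\<le>degree Q. coeff Q i * (y ^ i / exp y))"
    by (auto simp: poly_altdef sum_distrib_right exp_minus divide_inverse mult.assoc)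
  ultimately have "((\<lambda>y. poly Q y * exp (- y)) \<longlongrightarrow> 0) at_top"
    by simp
  from filterlim_compose[OF this filterlim_inverse_at_top_right]
  show ?thesis by (simp add: inverse_eq_divide)
qed

lemma poly_exp_recip_has_derivative:
  "(poly_exp_recip P has_real_derivative poly_exp_recip (poly_exp_recip_deriv P) t) (at t)"
proof -
  consider "t > 0" | "t < 0" | "t = 0" by linarith
  then show ?thesis
  proof cases
    case 1
    have "((\<lambda>s. poly P (1/s) * exp (-1/s)) has_real_derivative
        (poly (pderiv P) (1/t) * (-1/t^2)) * exp (-1/t) + poly P (1/t) * (exp (-1/t) * (1/t^2))) (at t)"
      using 1 by (auto intro!: derivative_eq_intros DERIV_chain2[OF poly_DERIV] simp: power2_eq_square)
    moreover have "(poly (pderiv P) (1/t) * (-1/t^2)) * exp (-1/t) + poly P (1/t) * (exp (-1/t) * (1/t^2))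
        = poly_exp_recip (poly_exp_recip_deriv P) t"
      using 1 by (simp add: poly_exp_recip_def poly_exp_recip_deriv_def algebra_simps power2_eq_square)
    ultimately have "((\<lambda>s. poly P (1/s) * exp (-1/s)) has_real_derivative
        poly_exp_recip (poly_exp_recip_deriv P) t) (at t)"
      by simp
    then show ?thesis
      by (rule has_field_derivative_transform_within_open[where S="{0<..}"])
         (use 1 in \<open>auto simp: poly_exp_recip_def\<close>)
  next
    case 2
    have "((\<lambda>s. 0) has_real_derivative poly_exp_recip (poly_exp_recip_deriv P) t) (at t)"
      using 2 by (simp add: poly_exp_recip_def)
    then show ?thesis
      by (rule has_field_derivative_transform_within_open[where S="{..<0}"])
         (use 2 in \<open>auto simp: poly_exp_recip_def\<close>)
  next
    case 3
    have right: "((\<lambda>h. (poly_exp_recip P (0 + h) - poly_exp_recip P 0) / h) \<longlongrightarrow> 0) (at_right 0)"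
    proof (rule Lim_transform_eventually[OF tendsto_poly_recip_exp[of "pCons 0 P"]])
      show "\<forall>\<^sub>F h in at_right 0. poly (pCons 0 P) (1/h) * exp (-1/h)
          = (poly_exp_recip P (0 + h) - poly_exp_recip P 0) / h"
        by (auto simp: eventually_at_right_field poly_exp_recip_def intro!: exI[of _ 1])
    qed
    have left: "((\<lambda>h. (poly_exp_recip P (0 + h) - poly_exp_recip P 0) / h) \<longlongrightarrow> 0) (at_left 0)"
    proof (rule Lim_transform_eventually[OF tendsto_const])
      show "\<forall>\<^sub>F h in at_left 0. 0 = (poly_exp_recip P (0 + h) - poly_exp_recip P 0) / h"
        by (auto simp: eventually_at_left_field poly_exp_recip_def intro!: exI[of _ "-1"])
    qed
    have "poly_exp_recip (poly_exp_recip_deriv P) 0 = 0"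
      by (simp add: poly_exp_recip_def)
    then show ?thesis using 3 left right by (simp add: DERIV_def filterlim_at_split)
  qed
qed

lemma smooth_real_poly_exp_recip: "smooth_real (poly_exp_recip P)"
proof -
  have deriv_eq: "deriv (poly_exp_recip P) = poly_exp_recip (poly_exp_recip_deriv P)" for P
    by (rule ext, rule DERIV_imp_deriv, rule poly_exp_recip_has_derivative)
  have "smooth_upto N (poly_exp_recip P)" for N
    by (induction N arbitrary: P)
       (use poly_exp_recip_has_derivative in \<open>auto simp: smooth_upto_0 smooth_upto_Suc deriv_eq real_differentiable_def\<close>)
  then show ?thesis by (simp add: smooth_real_def)
qed

lemma poly_exp_recip_1_pos: "t > 0 \<Longrightarrow> poly_exp_recip 1 t > 0"
  by (simp add: poly_exp_recip_def)

lemma poly_exp_recip_1_nonneg: "poly_exp_recip 1 t \<ge> 0"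
  by (simp add: poly_exp_recip_def)

lemma poly_exp_recip_1_eq_0: "t \<le> 0 \<Longrightarrow> poly_exp_recip 1 t = 0"
  by (simp add: poly_exp_recip_def)

definition smooth_step :: "real \<Rightarrow> real \<Rightarrow> real" where
  "smooth_step c s = poly_exp_recip 1 (1 - s) / (poly_exp_recip 1 (1 - s) + poly_exp_recip 1 (s - c))"

lemma smooth_step_denom_pos: "c < 1 \<Longrightarrow> poly_exp_recip 1 (1 - s) + poly_exp_recip 1 (s - c) > 0"
  using poly_exp_recip_1_pos[of "1 - s"] poly_exp_recip_1_pos[of "s - c"]
    poly_exp_recip_1_nonneg[of "1 - s"] poly_exp_recip_1_nonneg[of "s - c"]
  by (cases "s < 1") auto

lemma smooth_real_smooth_step:
  assumes "c < 1"
  shows "smooth_real (smooth_step c)"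
proof -
  have left: "smooth_real (\<lambda>s. poly_exp_recip 1 (1 + (-1) * s))"
    and right: "smooth_real (\<lambda>s. poly_exp_recip 1 (s + (-c)))"
    by (intro smooth_real_compose[OF smooth_real_poly_exp_recip] smooth_real_add smooth_real_const
        smooth_real_mult smooth_real_id)+
  have "smooth_real (\<lambda>s. poly_exp_recip 1 (1 + (-1) * s)
      * inverse (poly_exp_recip 1 (1 + (-1) * s) + poly_exp_recip 1 (s + (-c))))"
    using smooth_step_denom_pos[OF assms]
    by (intro smooth_real_mult left smooth_real_inverse smooth_real_add right) (auto simp: less_le)
  then show ?thesis by (simp add: smooth_step_def[abs_def] divide_inverse)
qed

lemma smooth_step_bounds: "c < 1 \<Longrightarrow> 0 \<le> smooth_step c s \<and> smooth_step c s \<le> 1"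
  using smooth_step_denom_pos[of c s] poly_exp_recip_1_nonneg[of "1 - s"] poly_exp_recip_1_nonneg[of "s - c"]
  by (auto simp: smooth_step_def divide_le_eq_1)

lemma smooth_step_eq_1: "c < 1 \<Longrightarrow> s \<le> c \<Longrightarrow> smooth_step c s = 1"
  using poly_exp_recip_1_pos[of "1 - s"] poly_exp_recip_1_eq_0[of "s - c"] by (simp add: smooth_step_def)

lemma smooth_step_eq_0: "1 \<le> s \<Longrightarrow> smooth_step c s = 0"
  using poly_exp_recip_1_eq_0[of "1 - s"] by (simp add: smooth_step_def)

section \<open>Partial derivatives\<close>

definition pdifferentiable :: "(real^'n::finite \<Rightarrow> real) \<Rightarrow> 'n \<Rightarrow> real^'n \<Rightarrow> bool" where
  "pdifferentiable f i x \<longleftrightarrow> (\<lambda>t. f (x + t *\<^sub>R axis i 1)) differentiable at 0"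

lemma pdifferentiable_DERIV:
  "pdifferentiable f i x \<Longrightarrow> ((\<lambda>t. f (x + t *\<^sub>R axis i 1)) has_real_derivative pdiff i f x) (at 0)"
  by (simp add: pdifferentiable_def pdiff_def DERIV_deriv)

lemma pdiff_eqI: "((\<lambda>t. f (x + t *\<^sub>R axis i 1)) has_real_derivative D) (at 0) \<Longrightarrow> pdiff i f x = D"
  by (simp add: pdiff_def DERIV_imp_deriv)

lemma pdifferentiableI: "((\<lambda>t. f (x + t *\<^sub>R axis i 1)) has_real_derivative D) (at 0) \<Longrightarrow> pdifferentiable f i x"
  by (auto simp: pdifferentiable_def real_differentiable_def)

lemma pdiff_const: "pdifferentiable (\<lambda>x. c) i x" "pdiff i (\<lambda>x. c) x = 0"
  by (simp_all add: pdifferentiable_def pdiff_eqI)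

lemma pdiff_add:
  assumes "pdifferentiable f i x" "pdifferentiable g i x"
  shows "pdifferentiable (\<lambda>x. f x + g x) i x" "pdiff i (\<lambda>x. f x + g x) x = pdiff i f x + pdiff i g x"
proof -
  have "((\<lambda>t. f (x + t *\<^sub>R axis i 1) + g (x + t *\<^sub>R axis i 1)) has_real_derivative
      pdiff i f x + pdiff i g x) (at 0)"
    by (intro DERIV_add pdifferentiable_DERIV assms)
  then show "pdifferentiable (\<lambda>x. f x + g x) i x" "pdiff i (\<lambda>x. f x + g x) x = pdiff i f x + pdiff i g x"
    by (auto intro: pdifferentiableI pdiff_eqI)
qed

lemma pdiff_mult:
  assumes "pdifferentiable f i x" "pdifferentiable g i x"
  shows "pdifferentiable (\<lambda>x. f x * g x) i x"
    "pdiff i (\<lambda>x. f x * g x) x = pdiff i f x * g x + f x * pdiff i g x"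
proof -
  have "((\<lambda>t. f (x + t *\<^sub>R axis i 1) * g (x + t *\<^sub>R axis i 1)) has_real_derivative
      f (x + 0 *\<^sub>R axis i 1) * pdiff i g x + pdiff i f x * g (x + 0 *\<^sub>R axis i 1)) (at 0)"
    by (intro DERIV_mult' pdifferentiable_DERIV assms)
  then show "pdifferentiable (\<lambda>x. f x * g x) i x"
    "pdiff i (\<lambda>x. f x * g x) x = pdiff i f x * g x + f x * pdiff i g x"
    by (auto intro: pdifferentiableI pdiff_eqI simp: algebra_simps)
qed

lemma real_polynomial_function_pdiff:
  fixes f :: "real^'n::finite \<Rightarrow> real"
  assumes "real_polynomial_function f"
  shows "pdifferentiable f i x" "real_polynomial_function (pdiff i f)"
proof -
  have "(\<forall>i x. pdifferentiable f i x) \<and> (\<forall>i. real_polynomial_function (pdiff i f))"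
    using assms
  proof (induction rule: real_polynomial_function.induct)
    case (linear f)
    interpret f: bounded_linear f by (rule linear)
    have line: "((\<lambda>t. f (x + t *\<^sub>R axis i 1)) has_real_derivative f (axis i 1)) (at 0)" for i x
    proof -
      have "(\<lambda>t. f (x + t *\<^sub>R axis i 1)) = (\<lambda>t. f x + t * f (axis i 1))"
        by (simp add: f.add f.scaleR)
      then show ?thesis by (auto intro!: derivative_eq_intros)
    qed
    then have "pdiff i f = (\<lambda>x. f (axis i 1))" for i
      by (auto intro: pdiff_eqI)
    then show ?case
      using line by (auto intro: pdifferentiableI)
  next
    case (const c)
    have "pdiff i (\<lambda>x. c) = (\<lambda>x. 0)" for i
      by (auto simp: pdiff_const)
    then show ?case by (auto simp: pdiff_const)
  next
    case (add f g)
    have "pdiff i (\<lambda>x. f x + g x) = (\<lambda>x. pdiff i f x + pdiff i g x)" for i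
      using add by (auto simp: pdiff_add)
    then show ?case using add by (auto simp: pdiff_add)
  next
    case (mult f g)
    have "pdiff i (\<lambda>x. f x * g x) = (\<lambda>x. pdiff i f x * g x + f x * pdiff i g x)" for i
      using mult by (auto simp: pdiff_mult)
    then show ?case using mult by (auto simp: pdiff_mult intro!: real_polynomial_function.intros(3,4))
  qed
  then show "pdifferentiable f i x" "real_polynomial_function (pdiff i f)"
    by auto
qed

lemma continuous_on_real_polynomial_function:
  "real_polynomial_function f \<Longrightarrow> continuous_on S f"
  by (simp add: continuous_at_imp_continuous_on continuous_real_polymonial_function)

lemma pdiffs_scaleR:
  assumes "smooth_fun f"
  shows "pdiffs is (\<lambda>x. f (s *\<^sub>R x)) = (\<lambda>x. s ^ length is * pdiffs is f (s *\<^sub>R x))"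
proof (induction "is")
  case (Cons i "is")
  show ?case
  proof (rule ext)
    fix x
    let ?g = "pdiffs is f"
    have "((\<lambda>u. ?g (s *\<^sub>R x + u *\<^sub>R axis i 1)) has_real_derivative pdiff i ?g (s *\<^sub>R x)) (at (s * 0))"
      using assms by (simp add: pdifferentiable_DERIV pdifferentiable_def smooth_fun_def)
    from DERIV_chain2[OF this DERIV_cmult_Id[of s 0]]
    have "((\<lambda>t. ?g (s *\<^sub>R x + (s * t) *\<^sub>R axis i 1)) has_real_derivative pdiff i ?g (s *\<^sub>R x) * s) (at 0)"
      by simp
    then have "((\<lambda>t. s ^ length is * ?g (s *\<^sub>R (x + t *\<^sub>R axis i 1))) has_real_derivative
        s ^ length is * (pdiff i ?g (s *\<^sub>R x) * s)) (at 0)"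
      by (intro DERIV_cmult) (simp add: scaleR_add_right)
    then have "pdiff i (\<lambda>x. s ^ length is * ?g (s *\<^sub>R x)) x = s ^ length is * (pdiff i ?g (s *\<^sub>R x) * s)"
      by (rule pdiff_eqI)
    then show "pdiffs (i # is) (\<lambda>x. f (s *\<^sub>R x)) x = s ^ length (i # is) * pdiffs (i # is) f (s *\<^sub>R x)"
      using Cons by (simp add: algebra_simps)
  qed
qed simp

lemma pdiffs_locally_constant:
  assumes "open U" "\<And>x. x \<in> U \<Longrightarrow> f x = K" "x \<in> U"
  shows "pdiffs is f x = (if is = [] then K else 0)"
  using assms(3)
proof (induction "is" arbitrary: x)
  case (Cons i "is")
  let ?S = "(\<lambda>t. x + t *\<^sub>R axis i 1) -` U"
  have "open ?S"
    by (rule continuous_open_vimage[OF assms(1)]) (intro continuous_intros)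
  have "((\<lambda>t. if is = [] then K else 0) has_real_derivative 0) (at 0)"
    by simp
  then have "((\<lambda>t. pdiffs is f (x + t *\<^sub>R axis i 1)) has_real_derivative 0) (at 0)"
    by (rule has_field_derivative_transform_within_open[OF _ \<open>open ?S\<close>]) (use Cons in auto)
  then show ?case by (simp add: pdiff_eqI)
qed (use assms in simp)

lemma exists_list_count_list: "\<exists>xs. \<forall>i. count_list xs i = (\<alpha> :: 'n::finite \<Rightarrow> nat) i"
proof (induction "mi_order \<alpha>" arbitrary: \<alpha>)
  case 0
  then have "\<forall>i. \<alpha> i = 0" by (simp add: mi_order_def)
  then show ?case by (intro exI[of _ "[]"]) simp
next
  case (Suc N)
  then obtain j where j: "\<alpha> j > 0"
    by (metis (full_types) gr0I mi_order_def sum.neutral nat.simps(3))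
  define \<beta> where "\<beta> = \<alpha>(j := \<alpha> j - 1)"
  have "mi_order \<alpha> = mi_order \<beta> + 1"
  proof -
    have "mi_order \<alpha> = \<alpha> j + (\<Sum>i\<in>UNIV - {j}. \<alpha> i)"
      by (simp add: mi_order_def sum.remove)
    moreover have "mi_order \<beta> = \<beta> j + (\<Sum>i\<in>UNIV - {j}. \<beta> i)"
      by (simp add: mi_order_def sum.remove)
    moreover have "(\<Sum>i\<in>UNIV - {j}. \<beta> i) = (\<Sum>i\<in>UNIV - {j}. \<alpha> i)"
      by (intro sum.cong) (auto simp: \<beta>_def)
    ultimately show ?thesis using j by (simp add: \<beta>_def)
  qed
  then obtain xs where xs: "\<forall>i. count_list xs i = \<beta> i" using Suc by force
  show ?case using xs j by (intro exI[of _ "j # xs"]) (auto simp: \<beta>_def)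
qed

lemma Dalpha_eq_pdiffs: "\<exists>is. length is = mi_order \<alpha> \<and> (\<forall>f. Dalpha \<alpha> f = pdiffs is f)"
proof (intro exI conjI allI)
  let ?is = "SOME is. \<forall>i. count_list is i = \<alpha> i"
  have "\<forall>i. count_list ?is i = \<alpha> i"
    using someI_ex[OF exists_list_count_list[of \<alpha>]] .
  then show "length ?is = mi_order \<alpha>"
    using sum_count_set[of ?is UNIV] by (simp add: mi_order_def)
  show "Dalpha \<alpha> f = pdiffs ?is f" for f
    by (simp add: Dalpha_def)
qed

section \<open>Radial test functions\<close>

definition sq_norm :: "real^'n::finite \<Rightarrow> real" where
  "sq_norm x = x \<bullet> x"

lemma sq_norm_eq: "sq_norm x = norm x ^ 2"
  by (simp add: sq_norm_def power2_norm_eq_inner)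

lemma sq_norm_DERIV: "((\<lambda>t. sq_norm (x + t *\<^sub>R axis i 1)) has_real_derivative 2 * x $ i) (at 0)"
proof -
  have "sq_norm (x + t *\<^sub>R axis i 1) = sq_norm x + 2 * t * x $ i + t^2" for t
    by (simp add: sq_norm_def inner_add_left inner_add_right inner_axis inner_axis' inner_axis_axis
        power2_eq_square algebra_simps)
  then show ?thesis by (auto intro!: derivative_eq_intros)
qed

lemma continuous_on_sq_norm: "continuous_on S sq_norm"
  unfolding sq_norm_def by (intro continuous_intros)

lemma pdiff_radial_mult:
  assumes "smooth_real h" "pdifferentiable c i x"
  shows "pdifferentiable (\<lambda>x. h (sq_norm x) * c x) i x"
    "pdiff i (\<lambda>x. h (sq_norm x) * c x) x = deriv h (sq_norm x) * (2 * x $ i * c x) + h (sq_norm x) * pdiff i c x"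
proof -
  have "((\<lambda>t. h (sq_norm (x + t *\<^sub>R axis i 1))) has_real_derivative
      deriv h (sq_norm (x + 0 *\<^sub>R axis i 1)) * (2 * x $ i)) (at 0)"
    by (rule DERIV_chain2[OF smooth_real_DERIV[OF assms(1)] sq_norm_DERIV])
  then have "((\<lambda>t. h (sq_norm (x + t *\<^sub>R axis i 1)) * c (x + t *\<^sub>R axis i 1)) has_real_derivative
      h (sq_norm (x + 0 *\<^sub>R axis i 1)) * pdiff i c x
      + deriv h (sq_norm (x + 0 *\<^sub>R axis i 1)) * (2 * x $ i) * c (x + 0 *\<^sub>R axis i 1)) (at 0)"
    by (intro DERIV_mult' pdifferentiable_DERIV assms)
  then show "pdifferentiable (\<lambda>x. h (sq_norm x) * c x) i x"
    "pdiff i (\<lambda>x. h (sq_norm x) * c x) x = deriv h (sq_norm x) * (2 * x $ i * c x) + h (sq_norm x) * pdiff i c x"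
    by (auto intro: pdifferentiableI pdiff_eqI simp: algebra_simps)
qed

definition radial_sum :: "(real \<Rightarrow> real) \<Rightarrow> (nat \<times> (real^'n::finite \<Rightarrow> real)) list \<Rightarrow> real^'n \<Rightarrow> real" where
  "radial_sum h cs x = (\<Sum>(j, c)\<leftarrow>cs. (deriv ^^ j) h (sq_norm x) * c x)"

lemma pdiff_radial_sum:
  assumes "smooth_real h" "\<forall>(j, c)\<in>set cs. real_polynomial_function c"
  shows "pdifferentiable (radial_sum h cs) i x \<and> pdiff i (radial_sum h cs) x
      = radial_sum h (concat (map (\<lambda>(j, c). [(Suc j, \<lambda>x. 2 * x $ i * c x), (j, pdiff i c)]) cs)) x"
  using assms(2)
proof (induction cs)
  case Nil
  then show ?case by (simp add: radial_sum_def pdiff_const)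
next
  case (Cons jc cs)
  obtain j c where jc: "jc = (j, c)" by fastforce
  have c: "real_polynomial_function c" using Cons.prems jc by auto
  have split: "radial_sum h (jc # cs) = (\<lambda>x. (deriv ^^ j) h (sq_norm x) * c x + radial_sum h cs x)"
    by (rule ext) (simp add: radial_sum_def jc)
  note head = pdiff_radial_mult[OF smooth_real_funpow_deriv[OF assms(1)] real_polynomial_function_pdiff(1)[OF c]]
  have tail: "pdifferentiable (radial_sum h cs) i x"
    "pdiff i (radial_sum h cs) x
      = radial_sum h (concat (map (\<lambda>(j, c). [(Suc j, \<lambda>x. 2 * x $ i * c x), (j, pdiff i c)]) cs)) x"
    using Cons by auto
  show ?case
    unfolding split using pdiff_add[OF head(1) tail(1)] head(2) tail(2) by (simp add: radial_sum_def jc)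
qed

lemma pdiffs_radial:
  assumes "smooth_real h"
  shows "\<exists>cs. (\<forall>(j, c)\<in>set cs. j \<le> length is \<and> real_polynomial_function c)
    \<and> pdiffs is (\<lambda>x. h (sq_norm x)) = radial_sum h cs"
proof (induction "is")
  case Nil
  have "(\<lambda>x. h (sq_norm x)) = radial_sum h [(0, \<lambda>x. 1)]"
    by (rule ext) (simp add: radial_sum_def)
  then show ?case by (intro exI[of _ "[(0, \<lambda>x. 1)]"]) auto
next
  case (Cons i "is")
  then obtain cs where cs: "\<forall>(j, c)\<in>set cs. j \<le> length is \<and> real_polynomial_function c"
    "pdiffs is (\<lambda>x. h (sq_norm x)) = radial_sum h cs"
    by auto
  define cs' where "cs' = concat (map (\<lambda>(j, c). [(Suc j, \<lambda>x. 2 * x $ i * c x), (j, pdiff i c)]) cs)"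
  have "\<forall>(j, c)\<in>set cs. real_polynomial_function c" using cs(1) by auto
  then have "pdiffs (i # is) (\<lambda>x. h (sq_norm x)) x = radial_sum h cs' x" for x
    using pdiff_radial_sum[OF assms, of cs i x] cs(2) by (simp add: cs'_def)
  then have eq: "pdiffs (i # is) (\<lambda>x. h (sq_norm x)) = radial_sum h cs'" ..
  have "real_polynomial_function (\<lambda>x. 2 * x $ i * c x)" if "real_polynomial_function c" for c :: "real^'a \<Rightarrow> real"
    by (rule real_polynomial_function.intros(4)[OF real_polynomial_function.intros(4)
          [OF real_polynomial_function.intros(2) real_polynomial_function.intros(1)[OF bounded_linear_vec_nth]] that])
  then have "\<forall>(j, c)\<in>set cs'. j \<le> length (i # is) \<and> real_polynomial_function c"
    using cs(1) real_polynomial_function_pdiff(2) by (fastforce simp: cs'_def)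
  with eq show ?case by blast
qed

lemma continuous_on_radial_sum:
  assumes "smooth_real h" "\<forall>(j, c)\<in>set cs. real_polynomial_function c"
  shows "continuous_on S (radial_sum h cs)"
  using assms(2)
proof (induction cs)
  case (Cons jc cs)
  obtain j c where jc: "jc = (j, c)" by fastforce
  have c: "continuous_on S c"
    using Cons.prems jc continuous_on_real_polynomial_function by auto
  have h: "continuous_on UNIV ((deriv ^^ j) h)"
    by (intro smooth_real_continuous_on smooth_real_funpow_deriv assms(1))
  have "radial_sum h (jc # cs) = (\<lambda>x. (deriv ^^ j) h (sq_norm x) * c x + radial_sum h cs x)"
    by (rule ext) (simp add: radial_sum_def jc)
  moreover have "continuous_on S (\<lambda>x. (deriv ^^ j) h (sq_norm x))"
    by (rule continuous_on_compose2[OF h continuous_on_sq_norm]) simp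
  ultimately show ?case
    using Cons c by (simp add: continuous_on_add continuous_on_mult)
qed (simp add: radial_sum_def[abs_def])

lemma smooth_fun_radial:
  assumes "smooth_real h"
  shows "smooth_fun (\<lambda>x. h (sq_norm x))"
  unfolding smooth_fun_def
proof (intro allI conjI)
  fix "is" :: "'a list"
  obtain cs where cs: "\<forall>(j, c)\<in>set cs. real_polynomial_function c"
    "pdiffs is (\<lambda>x. h (sq_norm x)) = radial_sum h cs"
    using pdiffs_radial[OF assms, of "is"] by auto
  show "continuous_on UNIV (pdiffs is (\<lambda>x. h (sq_norm x)))"
    using continuous_on_radial_sum[OF assms cs(1)] cs(2) by simp
  show "(\<lambda>t. pdiffs is (\<lambda>x. h (sq_norm x)) (x + t *\<^sub>R axis i 1)) differentiable at 0" for i x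
    using pdiff_radial_sum[OF assms cs(1), of i x] cs(2) by (simp add: pdifferentiable_def)
qed

lemma continuous_on_compact_abs_bound:
  fixes d :: "'a::metric_space \<Rightarrow> real"
  assumes "continuous_on K d" "compact K"
  shows "\<exists>D\<ge>0. \<forall>x\<in>K. \<bar>d x\<bar> \<le> D"
proof -
  have "bounded (d ` K)"
    by (intro compact_imp_bounded compact_continuous_image assms)
  then obtain D where "D > 0" "\<forall>y\<in>d ` K. norm y \<le> D"
    by (auto simp: bounded_pos)
  then show ?thesis by (intro exI[of _ D]) auto
qed

definition radial_cutoff :: "real \<Rightarrow> nat \<Rightarrow> real \<Rightarrow> real^'n::finite \<Rightarrow> real" where
  "radial_cutoff c k r x = smooth_step c (sq_norm x / r^2) ^ k"

lemma smooth_fun_radial_cutoff: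
  assumes "c < 1"
  shows "smooth_fun (radial_cutoff c k r)"
proof -
  have "smooth_real (\<lambda>s. smooth_step c (s * inverse (r^2)) ^ k)"
    by (intro smooth_real_power smooth_real_compose[OF smooth_real_smooth_step[OF assms]]
        smooth_real_mult smooth_real_id smooth_real_const)
  from smooth_fun_radial[OF this] show ?thesis
    by (simp add: radial_cutoff_def[abs_def] divide_inverse)
qed

lemma radial_sum_bound:
  assumes "c < 1" "m \<le> k" "\<forall>(j, d)\<in>set cs. j \<le> m \<and> real_polynomial_function d"
  shows "\<exists>C\<ge>0. \<forall>y. norm y \<le> 1 \<longrightarrow>
    \<bar>radial_sum (\<lambda>s. smooth_step c s ^ k) cs y\<bar> \<le> C * smooth_step c (sq_norm y) ^ (k - m)"
  using assms(3)
proof (induction cs)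
  case Nil then show ?case by (auto simp: radial_sum_def)
next
  case (Cons jd cs)
  obtain j d where jd: "jd = (j, d)" by fastforce
  have jm: "j \<le> m" and d: "real_polynomial_function d" using Cons.prems jd by auto
  obtain C where C: "C \<ge> 0" "\<forall>y. norm y \<le> 1 \<longrightarrow>
      \<bar>radial_sum (\<lambda>s. smooth_step c s ^ k) cs y\<bar> \<le> C * smooth_step c (sq_norm y) ^ (k - m)"
    using Cons by auto
  obtain e where e: "smooth_real e" "(deriv ^^ j) (\<lambda>s. smooth_step c s ^ k) = (\<lambda>s. smooth_step c s ^ (k - j) * e s)"
    using deriv_funpow_power[OF smooth_real_smooth_step[OF assms(1)], of j k] jm assms(2) by auto
  obtain D1 where D1: "D1 \<ge> 0" "\<forall>s\<in>{0..1}. \<bar>e s\<bar> \<le> D1"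
    using continuous_on_compact_abs_bound[OF smooth_real_continuous_on[OF e(1)] compact_Icc] by blast
  obtain D2 where D2: "D2 \<ge> 0" "\<forall>y\<in>cball 0 1. \<bar>d y\<bar> \<le> D2"
    using continuous_on_compact_abs_bound[OF continuous_on_real_polynomial_function[OF d] compact_cball] by blast
  show ?case
  proof (intro exI[of _ "C + D1 * D2"] conjI allI impI)
    fix y :: "real^'a" assume y: "norm y \<le> 1"
    let ?p = "smooth_step c (sq_norm y)"
    have p01: "0 \<le> ?p" "?p \<le> 1" using smooth_step_bounds[OF assms(1)] by auto
    have sq01: "sq_norm y \<in> {0..1}" using y by (simp add: sq_norm_eq power_le_one)
    have pow: "?p ^ (k - j) \<le> ?p ^ (k - m)" using p01 jm by (intro power_decreasing) auto
    have "\<bar>(deriv ^^ j) (\<lambda>s. smooth_step c s ^ k) (sq_norm y) * d y\<bar> = ?p ^ (k - j) * \<bar>e (sq_norm y)\<bar> * \<bar>d y\<bar>"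
      using e(2) p01 by (simp add: abs_mult)
    also have "\<dots> \<le> ?p ^ (k - m) * D1 * D2"
      using D1 D2 y sq01 pow p01 by (intro mult_mono) auto
    finally have "\<bar>(deriv ^^ j) (\<lambda>s. smooth_step c s ^ k) (sq_norm y) * d y\<bar> \<le> ?p ^ (k - m) * D1 * D2" .
    moreover have "radial_sum (\<lambda>s. smooth_step c s ^ k) (jd # cs) y
        = (deriv ^^ j) (\<lambda>s. smooth_step c s ^ k) (sq_norm y) * d y + radial_sum (\<lambda>s. smooth_step c s ^ k) cs y"
      by (simp add: radial_sum_def jd)
    ultimately show "\<bar>radial_sum (\<lambda>s. smooth_step c s ^ k) (jd # cs) y\<bar> \<le> (C + D1 * D2) * ?p ^ (k - m)"
      using C y by (auto simp: algebra_simps)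
  qed (use C D1 D2 in simp)
qed

lemma pdiffs_radial_cutoff_1_bound:
  assumes "c < 1" "m \<le> k" "0 < k" "length is \<le> m"
  shows "\<exists>C\<ge>0. \<forall>y. \<bar>pdiffs is (radial_cutoff c k 1) y\<bar> \<le> C * smooth_step c (sq_norm y) ^ (k - m)"
proof -
  obtain cs where cs: "\<forall>(j, d)\<in>set cs. j \<le> length is \<and> real_polynomial_function d"
      "pdiffs is (\<lambda>x. smooth_step c (sq_norm x) ^ k) = radial_sum (\<lambda>s. smooth_step c s ^ k) cs"
    using pdiffs_radial[OF smooth_real_power[OF smooth_real_smooth_step[OF assms(1)]]] by blast
  have "\<forall>(j, d)\<in>set cs. j \<le> m \<and> real_polynomial_function d" using cs(1) assms(4) by auto
  from radial_sum_bound[OF assms(1,2) this] obtain C where C: "C \<ge> 0" "\<forall>y. norm y \<le> 1 \<longrightarrow>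
      \<bar>radial_sum (\<lambda>s. smooth_step c s ^ k) cs y\<bar> \<le> C * smooth_step c (sq_norm y) ^ (k - m)"
    by auto
  have eq: "pdiffs is (radial_cutoff c k 1) = radial_sum (\<lambda>s. smooth_step c s ^ k) cs"
    using cs(2) by (simp add: radial_cutoff_def[abs_def])
  have outside: "pdiffs is (radial_cutoff c k 1) y = 0" if "norm y > 1" for y
  proof -
    have "radial_cutoff c k 1 z = 0" if "z \<in> {z. 1 < norm z}" for z :: "real^'a"
      using that assms(3) smooth_step_eq_0[of "sq_norm z" c]
      by (simp add: radial_cutoff_def sq_norm_eq one_less_power less_imp_le)
    moreover have "open {z :: real^'a. 1 < norm z}"
      by (simp add: open_Collect_less continuous_on_const continuous_on_norm_id)
    ultimately show ?thesis
      using pdiffs_locally_constant[of "{z. 1 < norm z}" "radial_cutoff c k 1" 0 y "is"] that by simp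
  qed
  show ?thesis
  proof (intro exI[of _ C] conjI allI)
    fix y :: "real^'a"
    have "0 \<le> C * smooth_step c (sq_norm y) ^ (k - m)"
      using C smooth_step_bounds[OF assms(1)] by auto
    then show "\<bar>pdiffs is (radial_cutoff c k 1) y\<bar> \<le> C * smooth_step c (sq_norm y) ^ (k - m)"
      using C outside[of y] eq by (cases "norm y \<le> 1") auto
  qed (use C in auto)
qed

lemma pdiffs_radial_cutoff_bound:
  assumes "c < 1" "m \<le> k" "0 < k" "length is = m"
  shows "\<exists>C\<ge>0. \<forall>r>0. \<forall>x. \<bar>pdiffs is (radial_cutoff c k r) x\<bar>
    \<le> C * (1/r) ^ m * smooth_step c (sq_norm x / r^2) ^ (k - m)"
proof -
  obtain C where C: "C \<ge> 0" "\<forall>y. \<bar>pdiffs is (radial_cutoff c k 1) y\<bar> \<le> C * smooth_step c (sq_norm y) ^ (k - m)"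
    using pdiffs_radial_cutoff_1_bound[OF assms(1-3), of "is"] assms(4) by auto
  show ?thesis
  proof (intro exI[of _ C] conjI allI impI)
    fix r :: real and x :: "real^'a" assume r: "r > 0"
    have sq: "sq_norm ((1/r) *\<^sub>R x) = sq_norm x / r^2"
      by (simp add: sq_norm_def power2_eq_square)
    have scale: "radial_cutoff c k r = (\<lambda>x. radial_cutoff c k 1 ((1/r) *\<^sub>R x))"
      by (simp add: radial_cutoff_def[abs_def] sq_norm_def power2_eq_square)
    have "pdiffs is (radial_cutoff c k r) x = (1/r) ^ m * pdiffs is (radial_cutoff c k 1) ((1/r) *\<^sub>R x)"
      unfolding scale pdiffs_scaleR[OF smooth_fun_radial_cutoff[OF assms(1)]] assms(4) by simp
    then show "\<bar>pdiffs is (radial_cutoff c k r) x\<bar> \<le> C * (1/r) ^ m * smooth_step c (sq_norm x / r^2) ^ (k - m)"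
      using C(2)[rule_format, of "(1/r) *\<^sub>R x"] r sq by (simp add: abs_mult mult_left_mono algebra_simps)
  qed (use C in auto)
qed

section \<open>Integrals and powers\<close>

lemma nn_integral_mult_eq_0_if_powr:
  fixes f g :: "'a \<Rightarrow> real"
  assumes "p > 0" "f \<in> borel_measurable M" "\<And>x. f x \<ge> 0"
    and "(\<integral>\<^sup>+ x. ennreal (f x powr p) \<partial>M) = 0"
  shows "(\<integral>\<^sup>+ x. ennreal (f x * g x) \<partial>M) = 0"
proof -
  have "AE x in M. ennreal (f x powr p) = 0"
    using assms(2,4) by (subst nn_integral_0_iff_AE[symmetric]) (auto intro!: measurable_compose[OF assms(2)])
  then have "AE x in M. ennreal (f x * g x) = 0"
    by eventually_elim (use assms(1,3) in auto)
  then show ?thesis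
    using nn_integral_cong_AE[of "\<lambda>x. ennreal (f x * g x)" "\<lambda>_. 0" M] by simp
qed

lemma nn_integral_Holder_pos:
  fixes f g :: "'a \<Rightarrow> real"
  assumes p: "p > 1" and fm: "f \<in> borel_measurable M" and gm: "g \<in> borel_measurable M"
    and f0: "\<And>x. f x \<ge> 0" and g0: "\<And>x. g x \<ge> 0"
    and A: "(\<integral>\<^sup>+ x. ennreal (f x powr p) \<partial>M) = ennreal A" "A > 0"
    and B: "(\<integral>\<^sup>+ x. ennreal (g x powr (p/(p-1))) \<partial>M) = ennreal B" "B > 0"
  shows "(\<integral>\<^sup>+ x. ennreal (f x * g x) \<partial>M) \<le> ennreal (A powr (1/p) * B powr ((p-1)/p))"
proof -
  define q where "q = p/(p-1)"
  have q: "q > 1" "1/p + 1/q = 1" using p by (auto simp: q_def field_simps)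
  define \<alpha> where "\<alpha> = A powr (1/p)"
  define \<beta> where "\<beta> = B powr (1/q)"
  have ab: "\<alpha> > 0" "\<beta> > 0" using A B by (auto simp: \<alpha>_def \<beta>_def)
  define c1 where "c1 = \<alpha> * \<beta> * (1/(p*A))"
  define c2 where "c2 = \<alpha> * \<beta> * (1/(q*B))"
  have c: "c1 \<ge> 0" "c2 \<ge> 0" using ab A B p q by (simp_all add: c1_def c2_def)
  have Young: "f x * g x \<le> c1 * f x powr p + c2 * g x powr q" for x
  proof -
    have "(f x / \<alpha>) * (g x / \<beta>) \<le> (f x / \<alpha>) powr p / p + (g x / \<beta>) powr q / q"
      by (rule Youngs_inequality) (use p q ab f0 g0 in auto)
    also have "\<dots> = (1/(p*A)) * f x powr p + (1/(q*B)) * g x powr q"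
      using A B p q by (simp add: \<alpha>_def \<beta>_def powr_divide f0 g0 powr_powr less_imp_le mult.commute)
    finally show ?thesis using ab by (simp add: c1_def c2_def field_simps)
  qed
  have m1: "(\<lambda>x. ennreal (f x powr p)) \<in> borel_measurable M" using fm by measurable
  have m2: "(\<lambda>x. ennreal (g x powr q)) \<in> borel_measurable M" using gm by measurable
  have "(\<integral>\<^sup>+ x. ennreal (f x * g x) \<partial>M)
      \<le> (\<integral>\<^sup>+ x. ennreal c1 * ennreal (f x powr p) + ennreal c2 * ennreal (g x powr q) \<partial>M)"
    using Young c by (intro nn_integral_mono) (simp flip: ennreal_plus ennreal_mult add: ennreal_leI)
  also have "\<dots> = ennreal c1 * ennreal A + ennreal c2 * ennreal B"
    using m1 m2 A B by (simp add: nn_integral_add nn_integral_cmult q_def)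
  also have "\<dots> = ennreal (\<alpha> * \<beta>)"
    using A B p q ab by (simp flip: ennreal_plus ennreal_mult add: c1_def c2_def field_simps)
  finally show ?thesis by (simp add: \<alpha>_def \<beta>_def q_def)
qed

lemma nn_integral_Holder:
  fixes f g :: "'a \<Rightarrow> real"
  assumes p: "p > 1" and fm: "f \<in> borel_measurable M" and gm: "g \<in> borel_measurable M"
    and f0: "\<And>x. f x \<ge> 0" and g0: "\<And>x. g x \<ge> 0"
    and A: "(\<integral>\<^sup>+ x. ennreal (f x powr p) \<partial>M) = ennreal A" "A \<ge> 0"
    and B: "(\<integral>\<^sup>+ x. ennreal (g x powr (p/(p-1))) \<partial>M) = ennreal B" "B \<ge> 0"
  shows "(\<integral>\<^sup>+ x. ennreal (f x * g x) \<partial>M) \<le> ennreal (A powr (1/p) * B powr ((p-1)/p))"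
proof -
  consider "A = 0" | "B = 0" | "A > 0" "B > 0" using A(2) B(2) by linarith
  then show ?thesis
  proof cases
    case 1
    then show ?thesis
      using nn_integral_mult_eq_0_if_powr[OF _ fm f0, of p g] p A(1) by simp
  next
    case 2
    then show ?thesis
      using nn_integral_mult_eq_0_if_powr[OF _ gm g0, of "p/(p-1)" f] p B(1) by (simp add: mult.commute)
  next
    case 3
    then show ?thesis by (rule nn_integral_Holder_pos[OF p fm gm f0 g0 A(1) _ B(1)])
  qed
qed

lemma powr_one_minus_ge:
  fixes t lam :: real
  assumes "0 < t" "lam > 1"
  shows "1 + (lam - 1) * (1 - t) \<le> t powr (1 - lam)"
proof -
  have "(1 - lam) * (t - 1) \<le> (1 - lam) * ln t"
    using assms ln_le_minus_one[of t] by (intro mult_left_mono_neg) auto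
  also have "1 + (1 - lam) * ln t \<le> exp ((1 - lam) * ln t)"
    by (rule exp_ge_add_one_self)
  also have "exp ((1 - lam) * ln t) = t powr (1 - lam)"
    using assms by (simp add: powr_def)
  finally show ?thesis by (simp add: algebra_simps)
qed

lemma diff_div_powr_le:
  fixes X X0 lam :: real
  assumes "0 < X0" "X0 \<le> X" "lam > 1"
  shows "(X - X0) / X powr lam \<le> (X0 powr (1 - lam) - X powr (1 - lam)) / (lam - 1)"
proof -
  define t where "t = X0 / X"
  have X: "X > 0" and t: "t > 0" using assms by (auto simp: t_def)
  have "X0 powr (1 - lam) - X powr (1 - lam) = X powr (1 - lam) * (t powr (1 - lam) - 1)"
    using t X by (simp add: t_def powr_divide algebra_simps)
  also have "\<dots> \<ge> X powr (1 - lam) * ((lam - 1) * (1 - t))"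
    using powr_one_minus_ge[OF t assms(3)] by (intro mult_left_mono) auto
  also have "X powr (1 - lam) * ((lam - 1) * (1 - t)) = (lam - 1) * ((X - X0) / X powr lam)"
    using X by (simp add: t_def powr_diff field_simps)
  finally show ?thesis using assms by (simp add: pos_le_divide_eq mult.commute)
qed

lemma powr_bound_eliminate:
  fixes lam r I X0 X X1 C :: real
  assumes lam: "lam > 1" and r: "r > 0" and I: "I > 0"
    and X: "0 < X0" "X0 \<le> X" "X \<le> X1" and C: "C \<ge> 0"
    and bound: "X \<le> C * (1/r)^m * (X - X0) powr (1/lam) * I powr ((lam-1)/lam)"
  shows "r powr (m * lam) * I powr (1 - lam) \<le> C powr lam * (X0 powr (1 - lam) - X1 powr (1 - lam)) / (lam - 1)"
proof -
  have Xpos: "X > 0" using X by simp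
  have "X powr lam \<le> (C * (1/r)^m * (X - X0) powr (1/lam) * I powr ((lam-1)/lam)) powr lam"
    using bound Xpos lam by (intro powr_mono2) auto
  also have "\<dots> = C powr lam * ((1/r)^m) powr lam * ((X - X0) powr (1/lam)) powr lam
      * (I powr ((lam-1)/lam)) powr lam"
    by (simp only: powr_mult)
  also have "((X - X0) powr (1/lam)) powr lam = X - X0"
    using lam X by (simp add: powr_powr)
  also have "(I powr ((lam-1)/lam)) powr lam = I powr (lam - 1)"
    using lam by (simp add: powr_powr)
  also have "((1/r)^m) powr lam = r powr (- (m * lam))"
    using r by (simp add: powr_realpow[symmetric] powr_powr powr_minus divide_inverse inverse_powr mult.commute)
  finally have "r powr (m * lam) * I powr (1 - lam) * X powr lam
      \<le> r powr (m * lam) * I powr (1 - lam) * (C powr lam * r powr (- (m * lam)) * (X - X0) * I powr (lam - 1))"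
    by (intro mult_left_mono) auto
  also have "\<dots> = C powr lam * (X - X0)"
    using r I by (simp add: powr_add[symmetric] algebra_simps)
  finally have "r powr (m * lam) * I powr (1 - lam) \<le> C powr lam * ((X - X0) / X powr lam)"
    using Xpos by (simp add: field_simps)
  also have "\<dots> \<le> C powr lam * ((X0 powr (1 - lam) - X powr (1 - lam)) / (lam - 1))"
    using diff_div_powr_le[OF X(1,2) lam] C by (intro mult_left_mono) auto
  also have "\<dots> \<le> C powr lam * ((X0 powr (1 - lam) - X1 powr (1 - lam)) / (lam - 1))"
    using X Xpos lam C by (intro mult_left_mono divide_right_mono diff_left_mono powr_mono2') auto
  finally show ?thesis by simp
qed

lemma nn_integral_pos_open:
  fixes w :: "'a::euclidean_space \<Rightarrow> real"
  assumes "w \<in> borel_measurable lebesgue" "\<And>x. w x > 0" "open U" "U \<noteq> {}"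
  shows "(\<integral>\<^sup>+ x. ennreal (w x) * indicator U x \<partial>lebesgue) > 0"
proof (rule ccontr)
  assume "\<not> ?thesis"
  moreover have "(\<lambda>x. ennreal (w x) * indicator U x) \<in> borel_measurable lebesgue"
    using assms(1,3) by (intro borel_measurable_times_ennreal measurable_compose[OF assms(1)])
      (simp_all add: borel_measurable_indicator)
  ultimately have "AE x in lebesgue. ennreal (w x) * indicator U x = 0"
    by (simp add: nn_integral_0_iff_AE not_less)
  then have "AE x in lebesgue. x \<notin> U"
  proof eventually_elim
    case (elim x)
    show ?case
    proof
      assume "x \<in> U"
      then have "ennreal (w x) = 0" using elim by simp
      then show False using assms(2)[of x] by (simp add: ennreal_eq_0_iff)
    qed
  qed
  then have "negligible U"
    using assms(3) by (subst negligible_iff_null_sets) (auto simp: AE_iff_null_sets)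
  then show False using open_not_negligible[OF assms(3,4)] by simp
qed

lemma continuous_on_borel_measurable_lebesgue:
  "continuous_on UNIV (f :: 'a::euclidean_space \<Rightarrow> real) \<Longrightarrow> f \<in> borel_measurable lebesgue"
  by (rule measurable_completion) (simp add: borel_measurable_continuous_onI)

lemma power_le_powr_inverse:
  fixes p lam :: real
  assumes "0 \<le> p" "p \<le> 1" "lam > 0" "M < K" "real K / lam \<le> real (K - M)"
  shows "p ^ (K - M) \<le> (p ^ K) powr (1 / lam)"
proof (cases "p = 0")
  case True
  then show ?thesis using assms(4) by (simp add: power_0_left)
next
  case False
  then have p: "p > 0" using assms by simp
  have "p ^ (K - M) = p powr real (K - M)" using p by (simp add: powr_realpow)
  also have "\<dots> \<le> p powr (real K / lam)" using assms p by (intro powr_mono') auto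
  also have "\<dots> = (p ^ K) powr (1 / lam)" using p by (simp add: powr_realpow[symmetric] powr_powr)
  finally show ?thesis .
qed

lemma powr_qfun_exponent:
  fixes r I lam :: real and m n :: nat
  assumes "r > 0" "I > 0"
  shows "r powr ((real m - real n) * lam + real n - 1) * (I / r ^ n) powr (1 - lam)
       = r powr (m * lam) * I powr (1 - lam) / r"
proof -
  have "(r ^ n) powr (1 - lam) = r powr (real n * (1 - lam))"
    using assms by (simp add: powr_realpow[symmetric] powr_powr)
  then have "r powr ((real m - real n) * lam + real n - 1) * (I / r ^ n) powr (1 - lam)
      = I powr (1 - lam) * (r powr ((real m - real n) * lam + real n - 1) / r powr (real n * (1 - lam)))"
    using assms by (simp add: powr_divide)
  also have "r powr ((real m - real n) * lam + real n - 1) / r powr (real n * (1 - lam)) = r powr (m * lam - 1)"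
    using assms by (simp add: powr_diff[symmetric] algebra_simps)
  also have "r powr (m * lam - 1) = r powr (m * lam) / r"
    using assms by (simp add: powr_diff)
  finally show ?thesis by simp
qed

section \<open>Dyadic decomposition of the radial integral\<close>

lemma power_bracket:
  fixes \<sigma> x :: real
  assumes "\<sigma> > 1" "x \<ge> 1"
  shows "\<exists>k. \<sigma> ^ k \<le> x \<and> x < \<sigma> ^ Suc k"
proof -
  define L where "L = log \<sigma> x"
  define k where "k = nat \<lfloor>L\<rfloor>"
  have k: "real k \<le> L" "L < real k + 1"
    using assms by (auto simp: k_def L_def)
  have "\<sigma> ^ k = \<sigma> powr real k" using assms by (simp add: powr_realpow)
  also have "\<dots> \<le> \<sigma> powr L" using k assms by (intro powr_mono) auto
  also have "\<sigma> powr L = x" using assms by (simp add: L_def)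
  finally have "\<sigma> ^ k \<le> x" .
  moreover have "x < \<sigma> ^ Suc k"
  proof -
    have "x < \<sigma> powr (real k + 1)"
      using k assms \<open>\<sigma> powr L = x\<close> by (metis powr_less_mono)
    also have "\<dots> = \<sigma> powr real (Suc k)" by (simp add: add.commute)
    also have "\<dots> = \<sigma> ^ Suc k" by (rule powr_realpow) (use assms in simp)
    finally show ?thesis .
  qed
  ultimately show ?thesis by blast
qed

lemma nn_integral_atLeast_1_le_steps:
  fixes Q :: "real \<Rightarrow> ennreal"
  assumes \<sigma>: "\<sigma> > 1" and R: "R \<ge> 1" and D: "\<And>k. D k \<ge> 0" and B: "B \<ge> 0"
    and step: "\<And>k r. R * \<sigma> ^ k \<le> r \<Longrightarrow> r < R * \<sigma> ^ Suc k \<Longrightarrow> Q r \<le> ennreal (D k)"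
    and initial: "\<And>r. 1 \<le> r \<Longrightarrow> r < R \<Longrightarrow> Q r \<le> ennreal B"
  shows "(\<integral>\<^sup>+ r \<in> {1..}. Q r \<partial>lborel)
    \<le> (\<Sum>k. ennreal (D k * (R * \<sigma> ^ Suc k - R * \<sigma> ^ k))) + ennreal (B * (R - 1))"
proof -
  define S where "S r = (\<Sum>k. ennreal (D k) * indicator {R * \<sigma> ^ k ..< R * \<sigma> ^ Suc k} r)
    + ennreal B * indicator {1..<R} r" for r
  have "Q r * indicator {1..} r \<le> S r" for r
  proof (cases "1 \<le> r")
    case True
    show ?thesis
    proof (cases "r < R")
      case True then show ?thesis using \<open>1 \<le> r\<close> initial[of r] by (simp add: S_def add_increasing)
    next
      case False
      then obtain k where k: "\<sigma> ^ k \<le> r / R" "r / R < \<sigma> ^ Suc k"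
        using power_bracket[OF \<sigma>, of "r / R"] R by auto
      then have rk: "R * \<sigma> ^ k \<le> r" "r < R * \<sigma> ^ Suc k"
        using R by (auto simp: field_simps)
      define F where "F k = ennreal (D k) * indicator {R * \<sigma> ^ k ..< R * \<sigma> ^ Suc k} r" for k
      have "Q r \<le> F k" using step[OF rk] rk by (simp add: F_def)
      also have "F k \<le> suminf F"
        using sum_le_suminf[OF summableI, of "{k}" F] by simp
      also have "suminf F \<le> S r"
        unfolding S_def F_def by (rule add_increasing2) simp_all
      finally show ?thesis using \<open>1 \<le> r\<close> by simp
    qed
  qed simp
  then have "(\<integral>\<^sup>+ r \<in> {1..}. Q r \<partial>lborel) \<le> (\<integral>\<^sup>+ r. S r \<partial>lborel)"
    by (intro nn_integral_mono) auto
  also have "\<dots> = (\<Sum>k. ennreal (D k) * emeasure lborel {R * \<sigma> ^ k ..< R * \<sigma> ^ Suc k})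
      + ennreal B * emeasure lborel {1..<R}"
    unfolding S_def by (subst nn_integral_add) (auto simp: nn_integral_suminf nn_integral_cmult_indicator)
  also have "\<dots> = (\<Sum>k. ennreal (D k * (R * \<sigma> ^ Suc k - R * \<sigma> ^ k))) + ennreal (B * (R - 1))"
    using \<sigma> R B D by (simp add: ennreal_mult)
  finally show ?thesis .
qed

lemma suminf_telescope_3_finite:
  fixes H :: "nat \<Rightarrow> real"
  assumes "antimono H" "\<And>k. H k \<ge> 0" "c \<ge> 0"
  shows "(\<Sum>k. ennreal (c * (H k - H (k + 3)))) < \<infinity>"
proof -
  have telescope: "(\<Sum>k<N. H (k + j) - H (Suc k + j)) = H j - H (N + j)" for N j
    by (induction N) auto
  have nonneg: "c * (H k - H (k + 3)) \<ge> 0" for k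
    using assms antimonoD[OF assms(1), of k "k + 3"] by simp
  have "(\<Sum>k<N. H k - H (k + 3)) = (\<Sum>j<3. \<Sum>k<N. H (k + j) - H (Suc k + j))" for N
    by (simp add: numeral_3_eq_3 sum.distrib[symmetric] algebra_simps)
  also have "\<dots> N = (\<Sum>j<3. H j - H (N + j))" for N
    by (simp only: telescope)
  also have "\<dots> N \<le> (\<Sum>j<3::nat. H 0)" for N
  proof (rule sum_mono)
    show "H j - H (N + j) \<le> H 0" for j
      using antimonoD[OF assms(1), of 0 j] assms(2)[of "N + j"] by simp
  qed
  finally have "(\<Sum>k<N. c * (H k - H (k + 3))) \<le> c * (3 * H 0)" for N
    using assms(3) by (simp add: sum_distrib_left[symmetric] mult_left_mono)
  then have "summable (\<lambda>k. c * (H k - H (k + 3)))"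
    using nonneg by (intro summableI_nonneg_bounded) auto
  then show ?thesis
    using nonneg by (simp add: suminf_ennreal2)
qed

lemma antimono_shell_bounds:
  fixes G :: "real \<Rightarrow> real"
  assumes \<sigma>: "\<sigma> > 1" and R: "R \<ge> 1" and G_antimono: "\<And>a b. R / \<sigma> \<le> a \<Longrightarrow> a \<le> b \<Longrightarrow> G b \<le> G a"
    and r: "R * \<sigma> ^ k \<le> r" "r < R * \<sigma> ^ Suc k"
  shows "G (r / \<sigma>) \<le> G (R * \<sigma> ^ k / \<sigma>)" "G (R * \<sigma> ^ (k + 3) / \<sigma>) \<le> G (\<sigma> * r)"
proof -
  have pos: "R * \<sigma> ^ k > 0" using R \<sigma> by simp
  have start: "R / \<sigma> \<le> R * \<sigma> ^ k / \<sigma>"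
    using \<sigma> R by (intro divide_right_mono) (auto simp: one_le_power)
  have "R * \<sigma> ^ k / \<sigma> \<le> r / \<sigma>" using r \<sigma> by (simp add: divide_right_mono)
  with start show "G (r / \<sigma>) \<le> G (R * \<sigma> ^ k / \<sigma>)" by (rule G_antimono)
  have "R * \<sigma> ^ k / \<sigma> \<le> R * \<sigma> ^ k" using pos \<sigma> by (simp add: divide_le_eq mult_le_cancel_left1)
  also have "\<dots> \<le> \<sigma> * r" using r pos \<sigma> by (smt (verit) mult_le_cancel_right1)
  finally have "R / \<sigma> \<le> \<sigma> * r" using start by linarith
  moreover have "\<sigma> * r \<le> R * \<sigma> ^ (k + 3) / \<sigma>"
    using r \<sigma> by (simp add: numeral_3_eq_3 field_simps)
  ultimately show "G (R * \<sigma> ^ (k + 3) / \<sigma>) \<le> G (\<sigma> * r)" by (rule G_antimono)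
qed

text \<open>The integrand is dominated on \<open>[R \<sigma>\<^sup>k, R \<sigma>\<^sup>k\<^sup>+\<^sup>1)\<close> by \<open>(H k - H (k + 3)) / (R \<sigma>\<^sup>k)\<close>
  with \<open>H k = G (R \<sigma>\<^sup>k\<^sup>-\<^sup>1)\<close>, and these bounds telescope.\<close>

lemma nn_integral_telescoping_finite:
  fixes Q :: "real \<Rightarrow> ennreal" and G :: "real \<Rightarrow> real"
  assumes \<sigma>: "\<sigma> > 1" and R: "R \<ge> 1" and K: "K \<ge> 0" and B: "B \<ge> 0"
    and G_antimono: "\<And>a b. R / \<sigma> \<le> a \<Longrightarrow> a \<le> b \<Longrightarrow> G b \<le> G a" and G_nonneg: "\<And>a. G a \<ge> 0"
    and large: "\<And>r. R \<le> r \<Longrightarrow> Q r \<le> ennreal (K * (G (r / \<sigma>) - G (\<sigma> * r)) / r)"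
    and initial: "\<And>r. 1 \<le> r \<Longrightarrow> r < R \<Longrightarrow> Q r \<le> ennreal B"
  shows "(\<integral>\<^sup>+ r \<in> {1..}. Q r \<partial>lborel) < \<infinity>"
proof -
  define H where "H k = G (R * \<sigma> ^ k / \<sigma>)" for k
  have "R / \<sigma> \<le> R * \<sigma> ^ k / \<sigma>" "R * \<sigma> ^ k / \<sigma> \<le> R * \<sigma> ^ l / \<sigma>" if "k \<le> l" for k l
    using \<sigma> R that by (auto intro!: divide_right_mono power_increasing simp: one_le_power)
  then have H: "antimono H" "\<And>k. H k \<ge> 0"
    by (auto simp: antimono_def H_def intro!: G_antimono G_nonneg)
  define D where "D k = K * (H k - H (k + 3)) / (R * \<sigma> ^ k)" for k
  have D: "D k \<ge> 0" for k
    using K H \<sigma> R by (auto simp: D_def antimono_def)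
  have step: "Q r \<le> ennreal (D k)" if rk: "R * \<sigma> ^ k \<le> r" "r < R * \<sigma> ^ Suc k" for k r
  proof -
    have pos: "R * \<sigma> ^ k > 0" using R \<sigma> by simp
    have "R \<le> R * \<sigma> ^ k" using R \<sigma> one_le_power[of \<sigma> k] by (simp add: mult_le_cancel_left1)
    then have "R \<le> r" using rk by linarith
    have "K * (G (r / \<sigma>) - G (\<sigma> * r)) / r \<le> K * (H k - H (k + 3)) / r"
      using antimono_shell_bounds[where G=G, OF \<sigma> R G_antimono rk] K rk pos unfolding H_def
      by (intro divide_right_mono mult_left_mono) auto
    also have "\<dots> \<le> D k"
      unfolding D_def using K H rk pos by (intro divide_left_mono mult_nonneg_nonneg) (auto simp: antimono_def)
    finally show ?thesis
      using large[OF \<open>R \<le> r\<close>] ennreal_leI order_trans by blast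
  qed
  have "(\<integral>\<^sup>+ r \<in> {1..}. Q r \<partial>lborel)
      \<le> (\<Sum>k. ennreal (D k * (R * \<sigma> ^ Suc k - R * \<sigma> ^ k))) + ennreal (B * (R - 1))"
    by (rule nn_integral_atLeast_1_le_steps[OF \<sigma> R D B step initial])
  also have "(\<lambda>k. D k * (R * \<sigma> ^ Suc k - R * \<sigma> ^ k)) = (\<lambda>k. K * (\<sigma> - 1) * (H k - H (k + 3)))"
    using R \<sigma> by (auto simp: D_def field_simps)
  also have "(\<Sum>k. ennreal (K * (\<sigma> - 1) * (H k - H (k + 3)))) < \<infinity>"
    using suminf_telescope_3_finite[OF H, of "K * (\<sigma> - 1)"] K \<sigma> by (simp add: mult.assoc)
  finally show ?thesis using B R by simp
qed

section \<open>Estimates for a solution\<close>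

locale inequality_solution =
  fixes m :: nat and lam \<sigma> :: real
    and A :: "('n::finite \<Rightarrow> nat) \<Rightarrow> real^'n \<Rightarrow> real \<Rightarrow> real"
    and a b u :: "real^'n \<Rightarrow> real"
  assumes m_pos: "m \<ge> 1" and lam: "lam > 1"
    and a_measurable: "a \<in> borel_measurable lebesgue" and a_pos: "\<And>x. a x > 0"
    and b_measurable: "b \<in> borel_measurable lebesgue" and b_pos: "\<And>x. b x > 0"
    and A_bound: "AE x in lebesgue. \<forall>\<zeta> \<alpha>. mi_order \<alpha> = m \<longrightarrow> \<bar>A \<alpha> x \<zeta>\<bar> \<le> a x * \<bar>\<zeta>\<bar>"
    and \<sigma>: "\<sigma> > 1"
    and solution: "is_solution m lam A b u"
begin

definition energy :: "real^'n \<Rightarrow> real" where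
  "energy x = b x * \<bar>u x\<bar> powr lam"

lemma energy_nonneg: "energy x \<ge> 0"
  using b_pos[of x] by (simp add: energy_def)

lemma integrable_energy_cball: "integrable lebesgue (\<lambda>x. indicator (cball 0 \<rho>) x *\<^sub>R energy x)"
proof -
  have "loc_integrable energy" using solution by (simp add: is_solution_def energy_def[abs_def])
  then show ?thesis by (simp add: loc_integrable_def set_integrable_def)
qed

lemma energy_cball_measurable: "(\<lambda>x. energy x * indicator (cball 0 \<rho>) x) \<in> borel_measurable lebesgue"
  using borel_measurable_integrable[OF integrable_energy_cball[of \<rho>]] by (simp add: mult.commute)

lemma energy_restrict_measurable:
  assumes "S \<in> sets lebesgue" "S \<subseteq> cball 0 \<rho>"
  shows "(\<lambda>x. energy x * indicator S x) \<in> borel_measurable lebesgue"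
proof -
  have "(\<lambda>x. energy x * indicator S x) = (\<lambda>x. (energy x * indicator (cball 0 \<rho>) x) * indicator S x)"
    using assms(2) by (auto simp: fun_eq_iff split: split_indicator)
  also have "\<dots> \<in> borel_measurable lebesgue"
    by (rule borel_measurable_times[OF energy_cball_measurable borel_measurable_indicator[OF assms(1)]])
  finally show ?thesis .
qed

lemma energy_ball_measurable: "(\<lambda>x. energy x * indicator (ball 0 \<rho>) x) \<in> borel_measurable lebesgue"
  by (rule energy_restrict_measurable[OF _ ball_subset_cball]) simp

lemma nn_integral_energy_finite:
  assumes "\<And>x. 0 \<le> f x" "\<And>x. f x \<le> energy x * indicator (cball 0 \<rho>) x"
  shows "(\<integral>\<^sup>+ x. ennreal (f x) \<partial>lebesgue) < \<infinity>"
proof -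
  have "(\<integral>\<^sup>+ x. ennreal (f x) \<partial>lebesgue) \<le> (\<integral>\<^sup>+ x. ennreal (energy x * indicator (cball 0 \<rho>) x) \<partial>lebesgue)"
    using assms by (intro nn_integral_mono ennreal_leI) auto
  also have "\<dots> = (\<integral>\<^sup>+ x. ennreal (norm (indicator (cball 0 \<rho>) x *\<^sub>R energy x)) \<partial>lebesgue)"
    using energy_nonneg by (intro nn_integral_cong) (simp split: split_indicator)
  also have "\<dots> < \<infinity>"
    using integrable_energy_cball[of \<rho>] by (simp add: integrable_iff_bounded)
  finally show ?thesis .
qed

definition ball_energy :: "real \<Rightarrow> real" where
  "ball_energy \<rho> = enn2real (\<integral>\<^sup>+ x. ennreal (energy x * indicator (ball 0 \<rho>) x) \<partial>lebesgue)"

lemma ennreal_ball_energy: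
  "ennreal (ball_energy \<rho>) = (\<integral>\<^sup>+ x. ennreal (energy x * indicator (ball 0 \<rho>) x) \<partial>lebesgue)"
proof -
  have "(\<integral>\<^sup>+ x. ennreal (energy x * indicator (ball 0 \<rho>) x) \<partial>lebesgue) < \<infinity>"
    using energy_nonneg by (intro nn_integral_energy_finite[of _ \<rho>]) (auto split: split_indicator)
  then show ?thesis by (simp add: ball_energy_def ennreal_enn2real_if)
qed

lemma ball_energy_nonneg: "ball_energy \<rho> \<ge> 0"
  by (simp add: ball_energy_def)

lemma ball_energy_mono:
  assumes "\<rho>1 \<le> \<rho>2"
  shows "ball_energy \<rho>1 \<le> ball_energy \<rho>2"
proof -
  have "ennreal (ball_energy \<rho>1) \<le> ennreal (ball_energy \<rho>2)"
    unfolding ennreal_ball_energy using energy_nonneg assms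
    by (intro nn_integral_mono ennreal_leI) (auto split: split_indicator)
  then show ?thesis by (simp add: ennreal_le_iff[OF ball_energy_nonneg])
qed

lemma ball_energy_pos:
  assumes "\<not> (AE x in lebesgue. u x = 0)"
  shows "\<exists>\<rho>>0. ball_energy \<rho> > 0"
proof (rule ccontr)
  assume "\<not> (\<exists>\<rho>>0. ball_energy \<rho> > 0)"
  then have "ball_energy (real (Suc k)) = 0" for k
    using ball_energy_nonneg[of "real (Suc k)"] by (metis of_nat_0_less_iff zero_less_Suc order_less_le)
  then have "AE x in lebesgue. ennreal (energy x * indicator (ball 0 (real (Suc k))) x) = 0" for k
    using ennreal_ball_energy[of "real (Suc k)"] measurable_compose[OF energy_ball_measurable, of ennreal]
    by (subst nn_integral_0_iff_AE[symmetric]) auto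
  then have "AE x in lebesgue. \<forall>k. ennreal (energy x * indicator (ball 0 (real (Suc k))) x) = 0"
    by (simp add: AE_all_countable)
  then have "AE x in lebesgue. u x = 0"
  proof eventually_elim
    case (elim x)
    obtain k where "norm x < real (Suc k)"
      using reals_Archimedean2[of "norm x"] by (metis less_Suc_eq of_nat_Suc of_nat_less_iff order_less_trans)
    then have "energy x = 0" using elim[rule_format, of k] energy_nonneg[of x] by simp
    then show ?case using b_pos[of x] by (simp add: energy_def)
  qed
  with assms show False by simp
qed

text \<open>The exponent is chosen with \<open>k / \<lambda> \<le> k - m\<close>, so that the bound by the \<open>(k - m)\<close>-th power
  of the step function in \<open>pdiffs_radial_cutoff_bound\<close> becomes a bound by \<open>phi r x powr (1/lam)\<close>.\<close>

definition test_exponent :: nat where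
  "test_exponent = nat \<lceil>m * lam / (lam - 1)\<rceil> + m + 1"

definition phi :: "real \<Rightarrow> real^'n \<Rightarrow> real" where
  "phi r = radial_cutoff (1 / \<sigma>^2) test_exponent r"

lemma inverse_sigma_sq_less_1: "1 / \<sigma>^2 < 1"
  using \<sigma> by (simp add: one_less_power divide_less_eq)

lemma test_exponent_bounds: "m < test_exponent" "real test_exponent / lam \<le> real (test_exponent - m)"
proof -
  show "m < test_exponent" by (simp add: test_exponent_def)
  have "m * lam / (lam - 1) \<le> real test_exponent" by (simp add: test_exponent_def) linarith
  then have "real test_exponent \<le> (real test_exponent - m) * lam"
    using lam by (simp add: divide_le_eq algebra_simps)
  then show "real test_exponent / lam \<le> real (test_exponent - m)"
    using lam \<open>m < test_exponent\<close> by (simp add: divide_le_eq of_nat_diff)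
qed

lemma phi_eq_1: "r > 0 \<Longrightarrow> norm x < r / \<sigma> \<Longrightarrow> phi r x = 1"
proof -
  assume r: "r > 0" and x: "norm x < r / \<sigma>"
  then have "(norm x / r)^2 \<le> (1 / \<sigma>)^2"
    by (intro power_mono) (auto simp: field_simps)
  then have "sq_norm x / r^2 \<le> 1 / \<sigma>^2"
    by (simp add: sq_norm_eq power_divide)
  then show ?thesis by (simp add: phi_def radial_cutoff_def smooth_step_eq_1[OF inverse_sigma_sq_less_1])
qed

lemma phi_eq_0: "r > 0 \<Longrightarrow> r \<le> norm x \<Longrightarrow> phi r x = 0"
proof -
  assume r: "r > 0" and x: "r \<le> norm x"
  then have "1 \<le> (norm x / r)^2" by (simp add: one_le_power)
  then have "1 \<le> sq_norm x / r^2" by (simp add: sq_norm_eq power_divide)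
  then show ?thesis using test_exponent_bounds(1) by (simp add: phi_def radial_cutoff_def smooth_step_eq_0)
qed

lemma phi_nonneg: "0 \<le> phi r x" and phi_le_1: "phi r x \<le> 1"
  using smooth_step_bounds[OF inverse_sigma_sq_less_1] by (auto simp: phi_def radial_cutoff_def power_le_one)

lemma phi_measurable: "phi r \<in> borel_measurable lebesgue"
proof (rule continuous_on_borel_measurable_lebesgue)
  have "continuous_on UNIV (pdiffs [] (phi r))"
    using smooth_fun_radial_cutoff[OF inverse_sigma_sq_less_1] unfolding smooth_fun_def phi_def by blast
  then show "continuous_on UNIV (phi r)" by simp
qed

lemma test_fun_phi:
  assumes "r > 0"
  shows "test_fun (phi r)"
proof -
  have "{x. phi r x \<noteq> 0} \<subseteq> ball 0 r"
    using phi_eq_0[OF assms] by (metis (mono_tags) mem_Collect_eq mem_ball_0 not_le subsetI)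
  then have "bounded {x. phi r x \<noteq> 0}" using bounded_subset by blast
  then show ?thesis
    using smooth_fun_radial_cutoff[OF inverse_sigma_sq_less_1] by (simp add: test_fun_def phi_def compact_closure)
qed

definition annulus :: "real \<Rightarrow> (real^'n) set" where
  "annulus r = ball 0 (\<sigma> * r) - ball 0 (r / \<sigma>)"

lemma annulus_sets: "annulus r \<in> sets lebesgue"
  unfolding annulus_def by (intro sets.Diff) simp_all

lemma annulus_subset_cball: "annulus r \<subseteq> cball 0 (\<sigma> * r)"
  by (auto simp: annulus_def)

lemma pdiffs_phi_outside_annulus:
  assumes "r > 0" "x \<notin> annulus r" "is \<noteq> []"
  shows "pdiffs is (phi r) x = 0"
proof -
  have "r < \<sigma> * r" using \<sigma> assms(1) by simp
  then consider "norm x < r / \<sigma>" | "norm x > r"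
    using assms(2) unfolding annulus_def by (auto simp: not_less)
  then show ?thesis
  proof cases
    case 1
    then show ?thesis
      using pdiffs_locally_constant[of "ball 0 (r / \<sigma>)" "phi r" 1 x "is"] phi_eq_1[OF assms(1)] assms(3)
      by simp
  next
    case 2
    have "open {x :: real^'n. r < norm x}"
      by (simp add: open_Collect_less continuous_on_const continuous_on_norm_id)
    then show ?thesis
      using pdiffs_locally_constant[of "{x. r < norm x}" "phi r" 0 x "is"] phi_eq_0[OF assms(1)] 2
      by simp
  qed
qed

lemma Dalpha_phi_bound:
  assumes "mi_order \<alpha> = m"
  shows "\<exists>C\<ge>0. \<forall>r>0. \<forall>x. \<bar>Dalpha \<alpha> (phi r) x\<bar> \<le> C * (1/r)^m * phi r x powr (1/lam) * indicator (annulus r) x"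
proof -
  obtain "is" where len: "length is = m" and D: "\<And>f. Dalpha \<alpha> f = pdiffs is f"
    using Dalpha_eq_pdiffs[of \<alpha>] assms by auto
  obtain C where C: "C \<ge> 0" "\<forall>r>0. \<forall>x. \<bar>pdiffs is (phi r) x\<bar>
      \<le> C * (1/r)^m * smooth_step (1 / \<sigma>^2) (sq_norm x / r^2) ^ (test_exponent - m)"
    using pdiffs_radial_cutoff_bound[OF inverse_sigma_sq_less_1 less_imp_le[OF test_exponent_bounds(1)] _ len]
      test_exponent_bounds(1) by (auto simp: phi_def)
  have "\<bar>Dalpha \<alpha> (phi r) x\<bar> \<le> C * (1/r)^m * phi r x powr (1/lam) * indicator (annulus r) x"
    if r: "r > 0" for r x
  proof (cases "x \<in> annulus r")
    case True
    have "smooth_step (1 / \<sigma>^2) (sq_norm x / r^2) ^ (test_exponent - m) \<le> phi r x powr (1/lam)"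
      unfolding phi_def radial_cutoff_def
      using smooth_step_bounds[OF inverse_sigma_sq_less_1] lam test_exponent_bounds by (intro power_le_powr_inverse) auto
    then have "C * (1/r)^m * smooth_step (1 / \<sigma>^2) (sq_norm x / r^2) ^ (test_exponent - m)
        \<le> C * (1/r)^m * phi r x powr (1/lam)"
      using C(1) r by (intro mult_left_mono) auto
    then show ?thesis
      using True C(2) r by (auto simp: D intro: order_trans)
  next
    case False
    have "is \<noteq> []" using len m_pos by auto
    then show ?thesis using pdiffs_phi_outside_annulus[OF r False] False by (simp add: D)
  qed
  with C(1) show ?thesis by blast
qed

definition pairing :: "real \<Rightarrow> real^'n \<Rightarrow> real" where
  "pairing r x = (\<Sum>\<alpha>\<in>{\<alpha>. mi_order \<alpha> = m}. A \<alpha> x (u x) * Dalpha \<alpha> (phi r) x)"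

lemma energy_phi_le_pairing:
  assumes "r > 0"
  shows "(\<integral>x. energy x * phi r x \<partial>lebesgue) \<le> integral\<^sup>L lebesgue (pairing r)"
  using solution test_fun_phi[OF assms] phi_nonneg
  by (auto simp: is_solution_def pairing_def[abs_def] energy_def)

lemma pairing_bound:
  "\<exists>C\<ge>0. \<forall>r>0. AE x in lebesgue.
    \<bar>pairing r x\<bar> \<le> C * (1/r)^m * (a x * \<bar>u x\<bar> * phi r x powr (1/lam) * indicator (annulus r) x)"
proof -
  define S where "S = {\<alpha>::'n \<Rightarrow> nat. mi_order \<alpha> = m}"
  have "\<forall>\<alpha>\<in>S. \<exists>C\<ge>0. \<forall>r>0. \<forall>x. \<bar>Dalpha \<alpha> (phi r) x\<bar> \<le> C * (1/r)^m * phi r x powr (1/lam) * indicator (annulus r) x"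
    using Dalpha_phi_bound by (simp add: S_def)
  then obtain C where C: "\<And>\<alpha>. \<alpha> \<in> S \<Longrightarrow> C \<alpha> \<ge> 0" "\<And>\<alpha> r x. \<alpha> \<in> S \<Longrightarrow> r > 0 \<Longrightarrow>
      \<bar>Dalpha \<alpha> (phi r) x\<bar> \<le> C \<alpha> * (1/r)^m * phi r x powr (1/lam) * indicator (annulus r) x"
    by metis
  have "AE x in lebesgue. \<bar>pairing r x\<bar> \<le> (\<Sum>\<alpha>\<in>S. C \<alpha>) * (1/r)^m
      * (a x * \<bar>u x\<bar> * phi r x powr (1/lam) * indicator (annulus r) x)" if r: "r > 0" for r
    using A_bound
  proof eventually_elim
    case (elim x)
    have "\<bar>pairing r x\<bar> \<le> (\<Sum>\<alpha>\<in>S. \<bar>A \<alpha> x (u x)\<bar> * \<bar>Dalpha \<alpha> (phi r) x\<bar>)"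
      unfolding pairing_def S_def[symmetric] by (rule order_trans[OF sum_abs]) (simp add: abs_mult)
    also have "\<dots> \<le> (\<Sum>\<alpha>\<in>S. (a x * \<bar>u x\<bar>) * (C \<alpha> * (1/r)^m * phi r x powr (1/lam) * indicator (annulus r) x))"
      using elim C(2)[OF _ r] a_pos[of x] by (intro sum_mono mult_mono) (auto simp: S_def)
    also have "\<dots> = (\<Sum>\<alpha>\<in>S. C \<alpha> * ((1/r)^m * (a x * \<bar>u x\<bar> * phi r x powr (1/lam) * indicator (annulus r) x)))"
      by (intro sum.cong) (simp_all add: algebra_simps)
    also have "\<dots> = (\<Sum>\<alpha>\<in>S. C \<alpha>) * (1/r)^m * (a x * \<bar>u x\<bar> * phi r x powr (1/lam) * indicator (annulus r) x)"
      by (simp add: sum_distrib_right mult.assoc)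
    finally show ?case .
  qed
  moreover have "(\<Sum>\<alpha>\<in>S. C \<alpha>) \<ge> 0" using C(1) by (simp add: sum_nonneg)
  ultimately show ?thesis by blast
qed

definition weight :: "real^'n \<Rightarrow> real" where
  "weight x = a x powr (lam / (lam - 1)) * b x powr (- 1 / (lam - 1))"

definition annulus_weight :: "real \<Rightarrow> ennreal" where
  "annulus_weight r = (\<integral>\<^sup>+ x \<in> annulus r. ennreal (weight x) \<partial>lebesgue)"

definition annulus_energy :: "real \<Rightarrow> ennreal" where
  "annulus_energy r = (\<integral>\<^sup>+ x. ennreal (energy x * phi r x * indicator (annulus r) x) \<partial>lebesgue)"

lemma qfun_eq_annulus_weight: "qfun lam \<sigma> a b r
  = (if annulus_weight r = \<infinity> then 0 else ennreal ((enn2real (annulus_weight r) / r ^ CARD('n)) powr (1 - lam)))"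
  by (simp add: qfun_def annulus_weight_def annulus_def weight_def Let_def)

lemma energy_phi_annulus_measurable:
  "(\<lambda>x. energy x * phi r x * indicator (annulus r) x) \<in> borel_measurable lebesgue"
proof -
  have "(\<lambda>x. energy x * phi r x * indicator (annulus r) x)
      = (\<lambda>x. (energy x * indicator (annulus r) x) * phi r x)"
    by (auto simp: fun_eq_iff)
  also have "\<dots> \<in> borel_measurable lebesgue"
    by (rule borel_measurable_times[OF energy_restrict_measurable[OF annulus_sets annulus_subset_cball] phi_measurable])
  finally show ?thesis .
qed

lemma annulus_energy_finite: "annulus_energy r < \<infinity>"
  unfolding annulus_energy_def
proof (rule nn_integral_energy_finite[of _ "\<sigma> * r"])
  fix x
  show "0 \<le> energy x * phi r x * indicator (annulus r) x"
    using energy_nonneg[of x] phi_nonneg[of r x] by simp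
  show "energy x * phi r x * indicator (annulus r) x \<le> energy x * indicator (cball 0 (\<sigma> * r)) x"
    using energy_nonneg[of x] phi_le_1[of r x] annulus_subset_cball[of r]
    by (cases "x \<in> annulus r") (auto simp: mult_left_le)
qed

lemma annulus_integrand_factor:
  "a x * \<bar>u x\<bar> * phi r x powr (1/lam) * indicator (annulus r) x
    = (energy x * phi r x * indicator (annulus r) x) powr (1/lam) * (a x * b x powr (-1/lam) * indicator (annulus r) x)"
proof -
  have "(energy x * phi r x) powr (1/lam) = b x powr (1/lam) * \<bar>u x\<bar> * phi r x powr (1/lam)"
    using lam by (simp add: energy_def powr_mult powr_powr)
  moreover have "b x powr (1/lam) * b x powr (-1/lam) = 1"
    using b_pos[of x] by (simp add: powr_add[symmetric])
  ultimately show ?thesis by (auto simp: algebra_simps split: split_indicator)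
qed

lemma annulus_factor_measurable:
  "(\<lambda>x. (energy x * phi r x * indicator (annulus r) x) powr (1/lam)) \<in> borel_measurable lebesgue"
  "(\<lambda>x. a x * b x powr (-1/lam) * indicator (annulus r) x) \<in> borel_measurable lebesgue"
  by (rule powr_real_measurable[OF energy_phi_annulus_measurable], simp)
     (intro borel_measurable_times powr_real_measurable a_measurable b_measurable
        borel_measurable_indicator annulus_sets; simp)

lemma nn_integral_annulus_Holder:
  assumes "annulus_weight r < \<infinity>"
  shows "(\<integral>\<^sup>+ x. ennreal (a x * \<bar>u x\<bar> * phi r x powr (1/lam) * indicator (annulus r) x) \<partial>lebesgue)
    \<le> ennreal (enn2real (annulus_energy r) powr (1/lam) * enn2real (annulus_weight r) powr ((lam-1)/lam))"
proof -
  define ind :: "real^'n \<Rightarrow> real" where "ind x = indicator (annulus r) x" for x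
  define f where "f x = (energy x * phi r x * ind x) powr (1/lam)" for x
  define g where "g x = a x * b x powr (-1/lam) * ind x" for x
  have ind01: "ind x = 0 \<or> ind x = 1" for x by (simp add: ind_def split: split_indicator)
  have f_measurable: "f \<in> borel_measurable lebesgue" and g_measurable: "g \<in> borel_measurable lebesgue"
    using annulus_factor_measurable unfolding f_def[abs_def] g_def[abs_def] ind_def by auto
  have g_nonneg: "g x \<ge> 0" for x using a_pos[of x] by (simp add: g_def ind_def)
  have "f x powr lam = energy x * phi r x * ind x" for x
    using energy_nonneg[of x] phi_nonneg[of r x] ind01[of x] lam by (auto simp: f_def powr_powr)
  then have f_powr: "(\<integral>\<^sup>+ x. ennreal (f x powr lam) \<partial>lebesgue) = ennreal (enn2real (annulus_energy r))"
    using annulus_energy_finite[of r] by (simp add: annulus_energy_def ind_def ennreal_enn2real_if less_top)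
  have "g x powr (lam/(lam-1)) = weight x * ind x" for x
  proof -
    have "(b x powr (-1/lam)) powr (lam/(lam-1)) = b x powr (-1/(lam-1))"
      using lam by (simp add: powr_powr)
    moreover have "ind x powr (lam/(lam-1)) = ind x" using ind01[of x] lam by auto
    ultimately show ?thesis by (simp add: g_def weight_def powr_mult)
  qed
  then have g_powr: "(\<integral>\<^sup>+ x. ennreal (g x powr (lam/(lam-1))) \<partial>lebesgue) = ennreal (enn2real (annulus_weight r))"
    using assms unfolding annulus_weight_def ind_def
    by (auto intro!: nn_integral_cong simp: ennreal_enn2real_if split: split_indicator)
  show ?thesis
    using nn_integral_Holder[OF lam f_measurable g_measurable _ g_nonneg f_powr _ g_powr]
    by (simp add: f_def g_def ind_def annulus_integrand_factor)
qed

lemma integral_pairing_le: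
  assumes C: "C \<ge> 0" "AE x in lebesgue.
      \<bar>pairing r x\<bar> \<le> C * (1/r)^m * (a x * \<bar>u x\<bar> * phi r x powr (1/lam) * indicator (annulus r) x)"
    and r: "r > 0" and finite: "annulus_weight r < \<infinity>"
  shows "integral\<^sup>L lebesgue (pairing r)
    \<le> C * (1/r)^m * (enn2real (annulus_energy r) powr (1/lam) * enn2real (annulus_weight r) powr ((lam-1)/lam))"
proof (rule integral_real_bounded)
  let ?h = "\<lambda>x. a x * \<bar>u x\<bar> * phi r x powr (1/lam) * indicator (annulus r) x"
  have h_measurable: "(\<lambda>x. ennreal (?h x)) \<in> borel_measurable lebesgue"
    unfolding annulus_integrand_factor
    by (intro measurable_compose[OF borel_measurable_times[OF annulus_factor_measurable]]) simp
  have "AE x in lebesgue. ennreal (pairing r x) \<le> ennreal (C * (1/r)^m) * ennreal (?h x)"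
    using C(2)
  proof eventually_elim
    case (elim x)
    have "?h x \<ge> 0" using a_pos[of x] by simp
    have "ennreal (pairing r x) \<le> ennreal (C * (1/r)^m * ?h x)"
      using elim by (intro ennreal_leI) linarith
    then show ?case using C(1) r \<open>?h x \<ge> 0\<close> by (simp add: ennreal_mult)
  qed
  then have "(\<integral>\<^sup>+ x. ennreal (pairing r x) \<partial>lebesgue) \<le> (\<integral>\<^sup>+ x. ennreal (C * (1/r)^m) * ennreal (?h x) \<partial>lebesgue)"
    by (rule nn_integral_mono_AE)
  also have "\<dots> = ennreal (C * (1/r)^m) * (\<integral>\<^sup>+ x. ennreal (?h x) \<partial>lebesgue)"
    by (rule nn_integral_cmult[OF h_measurable])
  also have "\<dots> \<le> ennreal (C * (1/r)^m) * ennreal (enn2real (annulus_energy r) powr (1/lam)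
      * enn2real (annulus_weight r) powr ((lam-1)/lam))"
    by (intro mult_left_mono nn_integral_annulus_Holder finite) auto
  finally show "(\<integral>\<^sup>+ x. ennreal (pairing r x) \<partial>lebesgue) \<le> ennreal (C * (1/r)^m
      * (enn2real (annulus_energy r) powr (1/lam) * enn2real (annulus_weight r) powr ((lam-1)/lam)))"
    using C r by (simp add: ennreal_mult)
qed (use C r in simp)

lemma energy_phi_measurable:
  assumes "r > 0"
  shows "(\<lambda>x. energy x * phi r x) \<in> borel_measurable lebesgue"
proof -
  have "(\<lambda>x. energy x * phi r x) = (\<lambda>x. (energy x * indicator (cball 0 r) x) * phi r x)"
    using phi_eq_0[OF assms] by (auto simp: fun_eq_iff split: split_indicator)
  also have "\<dots> \<in> borel_measurable lebesgue"
    by (rule borel_measurable_times[OF energy_cball_measurable phi_measurable])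
  finally show ?thesis .
qed

lemma nn_integral_energy_phi_eq:
  assumes "r > 0"
  shows "(\<integral>\<^sup>+ x. ennreal (energy x * phi r x) \<partial>lebesgue) = ennreal (ball_energy (r / \<sigma>)) + annulus_energy r"
proof -
  have "ennreal (energy x * phi r x)
      = ennreal (energy x * indicator (ball 0 (r / \<sigma>)) x) + ennreal (energy x * phi r x * indicator (annulus r) x)" for x
  proof -
    have "r / \<sigma> \<le> r" "r \<le> \<sigma> * r" using \<sigma> assms by (simp_all add: divide_le_eq)
    then consider "norm x < r / \<sigma>" | "r / \<sigma> \<le> norm x" "norm x < \<sigma> * r" | "r \<le> norm x" "r / \<sigma> \<le> norm x"
      by linarith
    then show ?thesis
    proof cases
      case 1
      then show ?thesis by (simp add: phi_eq_1[OF assms] annulus_def)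
    next
      case 2
      then show ?thesis by (simp add: annulus_def)
    next
      case 3
      then show ?thesis by (simp add: phi_eq_0[OF assms] annulus_def)
    qed
  qed
  then show ?thesis
    unfolding ennreal_ball_energy annulus_energy_def
    using energy_ball_measurable energy_phi_annulus_measurable by (simp add: nn_integral_add)
qed

lemma nn_integral_energy_phi_le:
  assumes "r > 0"
  shows "(\<integral>\<^sup>+ x. ennreal (energy x * phi r x) \<partial>lebesgue) \<le> ennreal (ball_energy (\<sigma> * r))"
  unfolding ennreal_ball_energy
proof (intro nn_integral_mono ennreal_leI)
  fix x
  have "r \<le> \<sigma> * r" using \<sigma> assms by simp
  then show "energy x * phi r x \<le> energy x * indicator (ball 0 (\<sigma> * r)) x"
    using energy_nonneg[of x] phi_le_1[of r x] phi_eq_0[OF assms, of x]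
    by (cases "norm x < \<sigma> * r") (auto simp: mult_left_le)
qed

lemma energy_estimate:
  assumes C: "C \<ge> 0" "AE x in lebesgue.
      \<bar>pairing r x\<bar> \<le> C * (1/r)^m * (a x * \<bar>u x\<bar> * phi r x powr (1/lam) * indicator (annulus r) x)"
    and r: "r > 0" and J: "ball_energy (r / \<sigma>) > 0"
    and I: "annulus_weight r < \<infinity>" "enn2real (annulus_weight r) > 0"
  shows "r powr (m * lam) * enn2real (annulus_weight r) powr (1 - lam)
    \<le> C powr lam * (ball_energy (r / \<sigma>) powr (1 - lam) - ball_energy (\<sigma> * r) powr (1 - lam)) / (lam - 1)"
proof -
  define X where "X = enn2real (\<integral>\<^sup>+ x. ennreal (energy x * phi r x) \<partial>lebesgue)"
  have X_split: "X = ball_energy (r / \<sigma>) + enn2real (annulus_energy r)"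
    using annulus_energy_finite[of r] ball_energy_nonneg[of "r / \<sigma>"]
    by (simp add: X_def nn_integral_energy_phi_eq[OF r] enn2real_plus)
  have "X \<le> enn2real (ennreal (ball_energy (\<sigma> * r)))"
    unfolding X_def by (rule enn2real_mono[OF nn_integral_energy_phi_le[OF r]]) simp
  then have X_le: "X \<le> ball_energy (\<sigma> * r)"
    by (simp add: ball_energy_nonneg)
  have "X = (\<integral>x. energy x * phi r x \<partial>lebesgue)"
    unfolding X_def using energy_nonneg phi_nonneg
    by (intro integral_eq_nn_integral[OF energy_phi_measurable[OF r], symmetric] AE_I2) simp
  also have "\<dots> \<le> integral\<^sup>L lebesgue (pairing r)"
    by (rule energy_phi_le_pairing[OF r])
  also have "\<dots> \<le> C * (1/r)^m * (enn2real (annulus_energy r) powr (1/lam)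
      * enn2real (annulus_weight r) powr ((lam-1)/lam))"
    by (rule integral_pairing_le[OF C r I(1)])
  finally have "X \<le> C * (1/r)^m * (X - ball_energy (r / \<sigma>)) powr (1/lam)
      * enn2real (annulus_weight r) powr ((lam-1)/lam)"
    by (simp add: X_split mult.assoc)
  from powr_bound_eliminate[OF lam r I(2) J _ X_le C(1) this] X_split
  show ?thesis by simp
qed

lemma qfun_large_bound:
  "\<exists>K\<ge>0. \<forall>r\<ge>1. ball_energy (r / \<sigma>) > 0 \<longrightarrow>
    ennreal (r powr ((real m - real CARD('n)) * lam + real CARD('n) - 1)) * qfun lam \<sigma> a b r
      \<le> ennreal (K * (ball_energy (r / \<sigma>) powr (1 - lam) - ball_energy (\<sigma> * r) powr (1 - lam)) / r)"
proof -
  obtain C where C: "C \<ge> 0" "\<forall>r>0. AE x in lebesgue.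
      \<bar>pairing r x\<bar> \<le> C * (1/r)^m * (a x * \<bar>u x\<bar> * phi r x powr (1/lam) * indicator (annulus r) x)"
    using pairing_bound by (elim exE conjE)
  define K where "K = C powr lam / (lam - 1)"
  have "ennreal (r powr ((real m - real CARD('n)) * lam + real CARD('n) - 1)) * qfun lam \<sigma> a b r
      \<le> ennreal (K * (ball_energy (r / \<sigma>) powr (1 - lam) - ball_energy (\<sigma> * r) powr (1 - lam)) / r)"
    if r: "r \<ge> 1" and J: "ball_energy (r / \<sigma>) > 0" for r
  proof (cases "annulus_weight r = \<infinity> \<or> enn2real (annulus_weight r) = 0")
    case True
    then have "qfun lam \<sigma> a b r = 0" using lam by (auto simp: qfun_eq_annulus_weight)
    then show ?thesis by simp
  next
    case False
    have I: "annulus_weight r < \<infinity>" "enn2real (annulus_weight r) > 0"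
      using False by (simp add: less_top) (metis False enn2real_nonneg less_eq_real_def)
    have "r powr ((real m - real CARD('n)) * lam + real CARD('n) - 1)
        * (enn2real (annulus_weight r) / r ^ CARD('n)) powr (1 - lam)
        = r powr (m * lam) * enn2real (annulus_weight r) powr (1 - lam) / r"
      using r I by (intro powr_qfun_exponent) auto
    also have "\<dots> \<le> K * (ball_energy (r / \<sigma>) powr (1 - lam) - ball_energy (\<sigma> * r) powr (1 - lam)) / r"
    proof (rule divide_right_mono)
      show "r powr (m * lam) * enn2real (annulus_weight r) powr (1 - lam)
          \<le> K * (ball_energy (r / \<sigma>) powr (1 - lam) - ball_energy (\<sigma> * r) powr (1 - lam))"
        using energy_estimate[OF C(1) C(2)[rule_format] _ J I] r unfolding K_def by (simp add: times_divide_eq_left)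
    qed (use r in simp)
    finally have bound: "r powr ((real m - real CARD('n)) * lam + real CARD('n) - 1)
        * (enn2real (annulus_weight r) / r ^ CARD('n)) powr (1 - lam)
      \<le> K * (ball_energy (r / \<sigma>) powr (1 - lam) - ball_energy (\<sigma> * r) powr (1 - lam)) / r" .
    have "qfun lam \<sigma> a b r = ennreal ((enn2real (annulus_weight r) / r ^ CARD('n)) powr (1 - lam))"
      using I(1) by (simp add: qfun_eq_annulus_weight)
    then have "ennreal (r powr ((real m - real CARD('n)) * lam + real CARD('n) - 1)) * qfun lam \<sigma> a b r
        = ennreal (r powr ((real m - real CARD('n)) * lam + real CARD('n) - 1)
            * (enn2real (annulus_weight r) / r ^ CARD('n)) powr (1 - lam))"
      by (simp only: ennreal_mult[symmetric] powr_ge_zero)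
    with ennreal_leI[OF bound] show ?thesis by (simp only:)
  qed
  moreover have "K \<ge> 0" using lam by (simp add: K_def)
  ultimately show ?thesis by blast
qed

lemma weight_pos: "weight x > 0"
  using a_pos[of x] b_pos[of x] by (simp add: weight_def)

lemma weight_measurable: "weight \<in> borel_measurable lebesgue"
  unfolding weight_def[abs_def]
  by (intro borel_measurable_times powr_real_measurable a_measurable b_measurable) simp_all

text \<open>For \<open>r \<in> [\<tau>\<^sup>j, \<tau>\<^sup>j\<^sup>+\<^sup>1)\<close>, \<open>\<tau> = \<surd>\<sigma>\<close>, the annulus contains the shell
  \<open>\<tau>\<^sup>j\<^sup>+\<^sup>1/\<sigma> < |x| < \<tau>\<^sup>j\<^sup>+\<^sup>2\<close>, an open set of positive weight.\<close>

lemma annulus_weight_shell_bound: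
  "\<exists>\<kappa>>0. \<forall>r. sqrt \<sigma> ^ j \<le> r \<longrightarrow> r < sqrt \<sigma> ^ Suc j \<longrightarrow> ennreal \<kappa> \<le> annulus_weight r"
proof -
  define \<tau> where "\<tau> = sqrt \<sigma>"
  have \<tau>: "\<tau> > 1" "\<tau>^2 = \<sigma>" using \<sigma> by (auto simp: \<tau>_def)
  define U :: "(real^'n) set" where "U = {x. \<tau>^(j+1) / \<sigma> < norm x \<and> norm x < \<tau>^(j+2)}"
  define K where "K = (\<integral>\<^sup>+ x. ennreal (weight x) * indicator U x \<partial>lebesgue)"
  have "open U" unfolding U_def by (intro open_Collect_conj open_Collect_less continuous_intros)
  moreover have "\<tau>^(j+1) / \<sigma> < \<tau>^(j+1)" "\<tau>^(j+1) < \<tau>^(j+2)"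
    using \<tau> \<sigma> by (simp_all add: divide_less_eq)
  then have "\<tau>^(j+1) *\<^sub>R axis i 1 \<in> U" for i :: 'n
    using \<tau> by (simp add: U_def)
  then have "U \<noteq> {}" by blast
  ultimately have K_pos: "K > 0"
    unfolding K_def by (rule nn_integral_pos_open[OF weight_measurable weight_pos])
  have "K \<le> annulus_weight r" if r: "\<tau>^j \<le> r" "r < \<tau>^(j+1)" for r
    unfolding K_def annulus_weight_def
  proof (intro nn_integral_mono)
    fix x
    have "x \<in> annulus r" if "x \<in> U"
    proof -
      have "norm x < \<tau>^(j+2)" using that by (simp add: U_def)
      also have "\<tau>^(j+2) = \<tau>^2 * \<tau>^j" by (simp only: power_add mult.commute)
      also have "\<dots> \<le> \<sigma> * r" using r \<tau> \<sigma> by simp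
      finally have "norm x < \<sigma> * r" .
      moreover have "r / \<sigma> < \<tau>^(j+1) / \<sigma>" using r \<sigma> by (simp add: divide_strict_right_mono)
      ultimately show ?thesis using that by (simp add: U_def annulus_def)
    qed
    then show "ennreal (weight x) * indicator U x \<le> ennreal (weight x) * indicator (annulus r) x"
      by (auto split: split_indicator)
  qed
  moreover have "ennreal (enn2real (min K 1)) = min K 1"
    using le_less_trans[OF min.cobounded2[of K 1]] by (simp add: ennreal_enn2real_if less_top)
  moreover have "enn2real (min K 1) > 0"
    using K_pos by (simp add: enn2real_positive_iff min_less_iff_disj)
  ultimately show ?thesis
    unfolding \<tau>_def by (metis Suc_eq_plus1 min.coboundedI1)
qed

lemma annulus_weight_lower_bound:
  "\<exists>\<kappa>>0. \<forall>r. 1 \<le> r \<longrightarrow> r < sqrt \<sigma> ^ N \<longrightarrow> ennreal \<kappa> \<le> annulus_weight r"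
proof -
  have "\<forall>j. \<exists>\<kappa>. \<kappa> > 0 \<and> (\<forall>r. sqrt \<sigma> ^ j \<le> r \<longrightarrow> r < sqrt \<sigma> ^ Suc j \<longrightarrow> ennreal \<kappa> \<le> annulus_weight r)"
    using annulus_weight_shell_bound by blast
  then obtain \<kappa> where \<kappa>: "\<And>j. \<kappa> j > 0"
    "\<And>j r. sqrt \<sigma> ^ j \<le> r \<Longrightarrow> r < sqrt \<sigma> ^ Suc j \<Longrightarrow> ennreal (\<kappa> j) \<le> annulus_weight r"
    by metis
  define \<kappa>0 where "\<kappa>0 = Min (insert 1 (\<kappa> ` {..<N}))"
  have "\<kappa>0 > 0" using \<kappa>(1) by (simp add: \<kappa>0_def)
  moreover have "ennreal \<kappa>0 \<le> annulus_weight r" if r: "1 \<le> r" "r < sqrt \<sigma> ^ N" for r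
  proof -
    have \<tau>: "sqrt \<sigma> > 1" using \<sigma> by simp
    obtain j where j: "sqrt \<sigma> ^ j \<le> r" "r < sqrt \<sigma> ^ Suc j" using power_bracket[OF \<tau> r(1)] by blast
    then have "sqrt \<sigma> ^ j < sqrt \<sigma> ^ N" using r by linarith
    then have "j < N" using power_less_imp_less_exp[OF \<tau>] by blast
    then have "ennreal \<kappa>0 \<le> ennreal (\<kappa> j)"
      by (intro ennreal_leI) (simp add: \<kappa>0_def)
    also have "\<dots> \<le> annulus_weight r" by (rule \<kappa>(2)[OF j])
    finally show ?thesis .
  qed
  ultimately show ?thesis by blast
qed

lemma qfun_initial_bound:
  "\<exists>B\<ge>0. \<forall>r. 1 \<le> r \<longrightarrow> r < sqrt \<sigma> ^ N \<longrightarrow> ennreal (r powr e) * qfun lam \<sigma> a b r \<le> ennreal B"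
proof -
  obtain \<kappa> where \<kappa>: "\<kappa> > 0" "\<And>r. 1 \<le> r \<Longrightarrow> r < sqrt \<sigma> ^ N \<Longrightarrow> ennreal \<kappa> \<le> annulus_weight r"
    using annulus_weight_lower_bound by blast
  define T where "T = sqrt \<sigma> ^ N"
  have T: "T \<ge> 1" using \<sigma> by (simp add: T_def one_le_power)
  define B where "B = T powr \<bar>e\<bar> * (\<kappa> / T ^ CARD('n)) powr (1 - lam)"
  have "ennreal (r powr e) * qfun lam \<sigma> a b r \<le> ennreal B" if r: "1 \<le> r" "r < T" for r
  proof (cases "annulus_weight r = \<infinity>")
    case False
    define I where "I = enn2real (annulus_weight r)"
    have "\<kappa> = enn2real (ennreal \<kappa>)" using \<kappa>(1) by simp
    also have "\<dots> \<le> I"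
      using \<kappa>(2)[of r] r False unfolding I_def T_def by (intro enn2real_mono) (auto simp: less_top)
    finally have "\<kappa> \<le> I" .
    moreover have "r ^ CARD('n) \<le> T ^ CARD('n)" using r by (intro power_mono) auto
    ultimately have "\<kappa> / T ^ CARD('n) \<le> I / r ^ CARD('n)"
      using r \<kappa>(1) by (intro frac_le) auto
    then have "(I / r ^ CARD('n)) powr (1 - lam) \<le> (\<kappa> / T ^ CARD('n)) powr (1 - lam)"
      using \<kappa>(1) T lam by (intro powr_mono2') auto
    moreover have "r powr e \<le> T powr \<bar>e\<bar>"
      using r by (intro order_trans[OF powr_mono powr_mono2]) auto
    ultimately have "r powr e * (I / r ^ CARD('n)) powr (1 - lam) \<le> B"
      unfolding B_def by (intro mult_mono) auto
    then show ?thesis using False by (simp add: qfun_eq_annulus_weight I_def ennreal_mult[symmetric] ennreal_leI)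
  qed (simp add: qfun_eq_annulus_weight)
  moreover have "B \<ge> 0" by (simp add: B_def)
  ultimately show ?thesis unfolding T_def by blast
qed

lemma nn_integral_qfun_finite:
  assumes "\<not> (AE x in lebesgue. u x = 0)"
  shows "(\<integral>\<^sup>+ r \<in> {1..}. ennreal (r powr ((real m - real CARD('n)) * lam + real CARD('n) - 1))
    * qfun lam \<sigma> a b r \<partial>lborel) < \<infinity>"
proof -
  obtain \<rho> where \<rho>: "\<rho> > 0" "ball_energy \<rho> > 0" using ball_energy_pos[OF assms] by blast
  have "sqrt \<sigma> > 1" using \<sigma> by simp
  then obtain N where N: "max 1 (\<sigma> * \<rho>) < sqrt \<sigma> ^ N" using real_arch_pow by blast
  define R where "R = sqrt \<sigma> ^ N"
  have R: "R \<ge> 1" using N by (simp add: R_def)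
  have "\<rho> \<le> R / \<sigma>" using N \<sigma> by (simp add: R_def field_simps)
  then have J_pos: "ball_energy s > 0" if "R / \<sigma> \<le> s" for s
    using \<rho>(2) ball_energy_mono[of \<rho> s] that by linarith
  obtain K where K: "K \<ge> 0" "\<forall>r\<ge>1. ball_energy (r / \<sigma>) > 0 \<longrightarrow>
      ennreal (r powr ((real m - real CARD('n)) * lam + real CARD('n) - 1)) * qfun lam \<sigma> a b r
      \<le> ennreal (K * (ball_energy (r / \<sigma>) powr (1 - lam) - ball_energy (\<sigma> * r) powr (1 - lam)) / r)"
    using qfun_large_bound by blast
  obtain B where B: "B \<ge> 0" "\<forall>r. 1 \<le> r \<longrightarrow> r < R \<longrightarrow>
      ennreal (r powr ((real m - real CARD('n)) * lam + real CARD('n) - 1)) * qfun lam \<sigma> a b r \<le> ennreal B"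
    using qfun_initial_bound unfolding R_def by blast
  show ?thesis
  proof (rule nn_integral_telescoping_finite[OF \<sigma> R K(1) B(1)])
    show "ball_energy b powr (1 - lam) \<le> ball_energy a powr (1 - lam)" if "R / \<sigma> \<le> a" "a \<le> b" for a b
      using J_pos[of a] that lam ball_energy_mono[of a b] by (intro powr_mono2') auto
    show "ennreal (r powr ((real m - real CARD('n)) * lam + real CARD('n) - 1)) * qfun lam \<sigma> a b r
        \<le> ennreal (K * (ball_energy (r / \<sigma>) powr (1 - lam) - ball_energy (\<sigma> * r) powr (1 - lam)) / r)"
      if "R \<le> r" for r
    proof -
      have "R / \<sigma> \<le> r / \<sigma>" using that \<sigma> by (simp add: divide_right_mono)
      then show ?thesis using K(2) J_pos that R by auto
    qed
  qed (use B(2) in auto)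
qed

end

theorem theorem2p2:
  fixes m :: nat and lam \<sigma> :: real
    and A :: "('n::finite \<Rightarrow> nat) \<Rightarrow> real^'n \<Rightarrow> real \<Rightarrow> real"
    and a b u :: "real^'n \<Rightarrow> real"
  assumes "m \<ge> 1" and "lam > 1"
    and "a \<in> borel_measurable lebesgue" and "\<And>x. a x > 0"
    and "b \<in> borel_measurable lebesgue" and "\<And>x. b x > 0"
    and "AE x in lebesgue. \<forall>\<zeta> \<alpha>. mi_order \<alpha> = m \<longrightarrow> \<bar>A \<alpha> x \<zeta>\<bar> \<le> a x * \<bar>\<zeta>\<bar>"
    and "\<sigma> > 1"
    and "(\<integral>\<^sup>+ r \<in> {1..}. ennreal (r powr ((real m - real CARD('n)) * lam + real CARD('n) - 1))
            * qfun lam \<sigma> a b r \<partial>lborel) = \<infinity>"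
    and "is_solution m lam A b u"
  shows "AE x in lebesgue. u x = 0"
proof (rule ccontr)
  interpret inequality_solution m lam \<sigma> A a b u
    using assms by unfold_locales
  assume "\<not> (AE x in lebesgue. u x = 0)"
  then show False
    using nn_integral_qfun_finite assms(9) by simp
qed

end
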